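(* Let $R>0$, $B_R(0)=\{x\in\mathbb{R}^N:|x|<R\}$, and assume $\int_0^1 t\,p(t)\,dt<+\infty$ and $\mu>0$. Then the problem $$-\Delta u=p(R-|x|)g(u)+1+\mu|\nabla u|\ \text{in }B_R(0),\quad u>0\ \text{in }B_R(0),\quad u=0\ \text{on }|x|=R$$ has at least one (radially symmetric) solution $u\in C^2(B_R(0))\cap C(\overline{B_R(0)})$.
   Context: $N\ge2$. The function $g\in C^1(0,\infty)$ is positive and decreasing with $\lim_{t\to0^+}g(t)=+\infty$. The function $p:(0,+\infty)\to(0,+\infty)$ is nonincreasing and Hölder continuous. *)

theory Defs
  imports "HOL-Analysis.Analysis"
begin

definition loc_hoelder_pos :: "(real \<Rightarrow> real) \<Rightarrow> bool" where
  "loc_hoelder_pos p \<longleftrightarrow>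
     (\<forall>a b. 0 < a \<and> a \<le> b \<longrightarrow>
        (\<exists>\<alpha> C. 0 < \<alpha> \<and> \<alpha> \<le> 1 \<and> 0 \<le> C \<and>
           (\<forall>s\<in>{a..b}. \<forall>t\<in>{a..b}. \<bar>p s - p t\<bar> \<le> C * \<bar>s - t\<bar> powr \<alpha>)))"

text \<open>Laplacian as the trace of the Hessian matrix.\<close>
definition trace_mat :: "real^'n^'n \<Rightarrow> real" where
  "trace_mat H = (\<Sum>i\<in>UNIV. H $ i $ i)"

end

theory Submission
  imports Defs
begin

text \<open>Radial solutions \<open>u x = V |x|\<close> with \<open>V\<close> nonincreasing are the solutions of the integral
  equation \<open>V r = a - \<integral>\<^sub>0\<^sup>r \<rho>(s)\<^sup>-\<^sup>1 \<integral>\<^sub>0\<^sup>s \<rho>(t) (p (R - t) g (V t) + 1) dt ds\<close>, where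
  \<open>\<rho>(t) = t\<^bsup>N-1\<^esup> e\<^bsup>-\<mu> t\<^esup>\<close> absorbs the gradient term. Once \<open>g\<close> is cut off at a level
  \<open>\<epsilon> > 0\<close>, the nonlinearity is bounded and nonincreasing and monotone iteration solves the equation
  for every initial value \<open>a\<close>. A comparison principle and a Gronwall estimate, whose constant is
  uniform because \<open>\<integral> t p(t) dt < \<infinity>\<close>, control the dependence on \<open>a\<close>. Shooting in \<open>a\<close>: the
  source term makes solutions with small \<open>a\<close> vanish before \<open>R\<close>, solutions with large \<open>a\<close> stay
  positive on \<open>[0, R)\<close>, and the surviving initial values form an up-set with open complement.
  At its infimum the solution survives but tends to \<open>0\<close> at \<open>R\<close>. Near the origin \<open>V'(r)/r\<close> and
  \<open>V''(r)\<close> both tend to \<open>-(p(R) g(V 0) + 1)/N\<close>, which makes \<open>u\<close> twice continuously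
  differentiable there.\<close>

lemma loc_hoelder_pos_imp_continuous_on:
  assumes "loc_hoelder_pos p"
  shows "continuous_on {0<..} p"
proof -
  have "isCont p t" if t: "0 < t" for t
  proof -
    obtain \<alpha> C where aC: "0 < \<alpha>" "\<alpha> \<le> 1" "0 \<le> C"
      and H: "\<And>s u. s \<in> {t/2..2*t} \<Longrightarrow> u \<in> {t/2..2*t} \<Longrightarrow> \<bar>p s - p u\<bar> \<le> C * \<bar>s - u\<bar> powr \<alpha>"
      using assms[unfolded loc_hoelder_pos_def, rule_format, of "t/2" "2*t"] t by auto
    show ?thesis unfolding isCont_def LIM_eq
    proof (intro allI impI)
      fix e :: real assume e: "0 < e"
      define d where "d = min (t / 2) ((e / (C + 1)) powr (1 / \<alpha>))"
      show "\<exists>s>0. \<forall>x. x \<noteq> t \<and> norm (x - t) < s \<longrightarrow> norm (p x - p t) < e"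
      proof (intro exI[of _ d] conjI allI impI)
        show "0 < d" using t e aC by (auto simp: d_def)
        fix x assume x: "x \<noteq> t \<and> norm (x - t) < d"
        then have "\<bar>x - t\<bar> < t / 2" by (simp add: d_def)
        then have "x - t < t / 2 \<and> - (x - t) < t / 2" by (simp only: abs_less_iff)
        then have xin: "x \<in> {t/2..2*t}" using t by auto
        have "\<bar>x - t\<bar> powr \<alpha> < ((e / (C + 1)) powr (1 / \<alpha>)) powr \<alpha>"
          using x aC by (intro powr_less_mono2) (auto simp: d_def)
        also have "\<dots> = e / (C + 1)" using aC e by (simp add: powr_powr)
        finally have "C * \<bar>x - t\<bar> powr \<alpha> \<le> C * (e / (C + 1))" using aC by (intro mult_left_mono) auto
        also have "\<dots> < e" using aC e by (simp add: field_simps)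
        finally show "norm (p x - p t) < e" using H[OF xin, of t] t by simp
      qed
    qed
  qed
  then show ?thesis by (intro continuous_at_imp_continuous_on) auto
qed

lemma continuous_first_crossing:
  fixes h :: "real \<Rightarrow> real"
  assumes h: "continuous_on {a..b} h" and start: "c < h a" and t: "t \<in> {a..b}" "h t \<le> c"
  obtains t1 where "t1 \<in> {a..b}" "h t1 = c" "\<And>s. s \<in> {a..<t1} \<Longrightarrow> c < h s"
proof -
  define S where "S = {s \<in> {a..b}. h s \<le> c}"
  have "closed S" unfolding S_def
    by (rule continuous_on_closed_Collect_le[OF h continuous_on_const closed_atLeastAtMost])
  moreover have "S \<noteq> {}" "bdd_below S" using t unfolding S_def by (auto intro: bdd_belowI[of _ a])
  ultimately have t1: "Inf S \<in> S" by (rule closed_contains_Inf[rotated -1])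
  have below: "c < h s" if "s \<in> {a..<Inf S}" for s
    using that cInf_lower[OF _ \<open>bdd_below S\<close>, of s] t1 by (force simp: S_def)
  obtain s where s: "a \<le> s" "s \<le> Inf S" "h s = c"
    using IVT2'[of h "Inf S" c a] t1 start continuous_on_subset[OF h] by (force simp: S_def)
  then have "s = Inf S" using below[of s] by force
  then show ?thesis using that t1 below s by (auto simp: S_def)
qed

lemma field_le_linear_epsilon:
  fixes x y a C :: real
  assumes C: "0 \<le> C" and h: "\<And>b. a < b \<Longrightarrow> b \<le> a + 1 \<Longrightarrow> x \<le> y + (b - a) * C"
  shows "x \<le> y"
proof (rule field_le_epsilon)
  fix e :: real assume e: "0 < e"
  define b where "b = a + min 1 (e / (C + 1))"
  have "(b - a) * C \<le> (e / (C + 1)) * C" unfolding b_def using C by (intro mult_right_mono) auto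
  also have "\<dots> \<le> e" using C e by (simp add: field_simps)
  finally show "x \<le> y + e" using h[of b] e C by (simp add: b_def)
qed

lemma has_integral_power_Icc0:
  assumes "0 \<le> s" "0 < n"
  shows "((\<lambda>t. t ^ (n - 1)) has_integral s ^ n / n) {0..s}"
proof -
  have "((\<lambda>t. t ^ (n - 1)) has_integral (s ^ n / n - 0 ^ n / n)) {0..s}"
  proof (rule fundamental_theorem_of_calculus[OF assms(1)])
    fix x assume "x \<in> {0..s}"
    have "((\<lambda>t. t ^ n / n) has_real_derivative (real n * x ^ (n - Suc 0)) / n) (at x within {0..s})"
      using assms(2) by (intro derivative_eq_intros) auto
    then show "((\<lambda>t. t ^ n / n) has_vector_derivative x ^ (n - 1)) (at x within {0..s})"
      using assms(2) by (simp add: has_real_derivative_iff_has_vector_derivative)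
  qed
  then show ?thesis using assms(2) by (simp add: power_0_left)
qed

lemma integral_reflect_Icc:
  fixes f :: "real \<Rightarrow> real"
  shows "integral {0..r} (\<lambda>t. f (R - t)) = integral {R - r..R} f"
  using Henstock_Kurzweil_Integration.integral_reflect_real[where f="\<lambda>s. f (s + R)" and a="-r" and b=0]
    integral_shift_real_ivl[where f=f and c=R and a="R - r" and b=R]
  by (simp add: algebra_simps)

lemma integral_integral_Icc:
  fixes f :: "real \<Rightarrow> real"
  assumes f: "continuous_on {a..b} f" and ab: "a \<le> b"
  shows "integral {a..b} (\<lambda>s. integral {a..s} f) = integral {a..b} (\<lambda>t. (b - t) * f t)"
proof -
  define H where "H s = s * integral {a..s} f - integral {a..s} (\<lambda>t. t * f t)" for s
  have tf: "continuous_on {a..b} (\<lambda>t. t * f t)" by (intro continuous_intros f)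
  have "((\<lambda>s. integral {a..s} f) has_integral (H b - H a)) {a..b}"
  proof (rule fundamental_theorem_of_calculus[OF ab])
    fix x assume x: "x \<in> {a..b}"
    have "(H has_real_derivative (1 * integral {a..x} f + f x * x) - x * f x) (at x within {a..b})"
      unfolding H_def
      by (intro DERIV_diff DERIV_mult DERIV_ident integral_has_real_derivative[OF f x]
          integral_has_real_derivative[OF tf x])
    then show "(H has_vector_derivative integral {a..x} f) (at x within {a..b})"
      by (simp add: has_real_derivative_iff_has_vector_derivative)
  qed
  then have "integral {a..b} (\<lambda>s. integral {a..s} f) = integral {a..b} (\<lambda>t. b * f t) - integral {a..b} (\<lambda>t. t * f t)"
    by (simp add: integral_unique H_def)
  also have "\<dots> = integral {a..b} (\<lambda>t. (b - t) * f t)"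
    by (subst Henstock_Kurzweil_Integration.integral_diff[symmetric])
       (auto intro!: integrable_continuous_interval continuous_intros f simp: left_diff_distrib)
  finally show ?thesis .
qed

lemma gronwall_exp:
  fixes d d' m M :: "real \<Rightarrow> real"
  assumes ab: "a \<le> b" and cont: "continuous_on {a..b} d" "continuous_on {a..b} M"
    and deriv: "\<And>x. a < x \<Longrightarrow> x < b \<Longrightarrow>
      (d has_real_derivative d' x) (at x) \<and> (M has_real_derivative m x) (at x) \<and> d' x \<le> m x * d x"
  shows "d b \<le> d a * exp (M b - M a)"
proof -
  define D where "D t = d t * exp (- M t)" for t
  have "D b \<le> D a"
  proof (rule DERIV_nonpos_imp_decreasing_open[OF ab])
    fix x assume x: "a < x" "x < b"
    then have "(D has_real_derivative d' x * exp (- M x) + d x * (exp (- M x) * - m x)) (at x)"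
      unfolding D_def using deriv by (auto intro!: derivative_eq_intros)
    moreover have "d' x * exp (- M x) + d x * (exp (- M x) * - m x) = (d' x - m x * d x) * exp (- M x)"
      by (simp add: algebra_simps)
    moreover have "(d' x - m x * d x) * exp (- M x) \<le> 0"
      using deriv[OF x] by (intro mult_nonpos_nonneg) auto
    ultimately show "\<exists>y. (D has_real_derivative y) (at x) \<and> y \<le> 0" by auto
  qed (auto simp: D_def intro!: continuous_intros cont)
  then show ?thesis by (simp add: D_def exp_diff exp_minus field_simps)
qed

section \<open>Radial functions\<close>

definition radial :: "(real \<Rightarrow> real) \<Rightarrow> real^'n \<Rightarrow> real" where
  "radial V x = V (norm x)"

text \<open>At the origin this is \<open>0\<close> by the convention \<open>x / 0 = 0\<close>.\<close>
definition radial_grad :: "(real \<Rightarrow> real) \<Rightarrow> real^'n \<Rightarrow> real^'n" where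
  "radial_grad V1 x = (V1 (norm x) / norm x) *\<^sub>R x"

text \<open>With \<open>V1 = V'\<close> and \<open>V2 = V''\<close>, the Hessian of \<open>x \<mapsto> V |x|\<close> is
  \<open>(V'' - V'/r) / r\<^sup>2 x x\<^sup>T + (V'/r) I\<close>; at the origin it is \<open>c I\<close>, where \<open>c\<close> is the common
  limit of \<open>V'/r\<close> and \<open>V''\<close>.\<close>
definition radial_hessian :: "(real \<Rightarrow> real) \<Rightarrow> (real \<Rightarrow> real) \<Rightarrow> real \<Rightarrow> real^'n \<Rightarrow> real^'n^'n" where
  "radial_hessian V1 V2 c x = (\<chi> i j. (V2 (norm x) - V1 (norm x) / norm x) / (norm x)^2 * x$i * x$j
      + (if i = j then (if x = 0 then c else V1 (norm x) / norm x) else 0))"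

definition radial_C2_profile :: "real \<Rightarrow> (real \<Rightarrow> real) \<Rightarrow> (real \<Rightarrow> real) \<Rightarrow> (real \<Rightarrow> real) \<Rightarrow> real \<Rightarrow> bool" where
  "radial_C2_profile R V V1 V2 c \<longleftrightarrow>
     (\<forall>r\<in>{0<..<R}. (V has_real_derivative V1 r) (at r) \<and> (V1 has_real_derivative V2 r) (at r) \<and> isCont V2 r)
   \<and> ((\<lambda>r. (V r - V 0) / r) \<longlongrightarrow> 0) (at_right 0)
   \<and> ((\<lambda>r. V1 r / r) \<longlongrightarrow> c) (at_right 0) \<and> (V2 \<longlongrightarrow> c) (at_right 0)"

lemma rank_one_plus_diag_mult_vec:
  fixes x h :: "real^'n" and a b :: real
  shows "((\<chi> i j. a * x$i * x$j + (if i = j then b else 0)) :: real^'n^'n) *v h = (a * (x \<bullet> h)) *\<^sub>R x + b *\<^sub>R h"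
proof -
  have "(\<Sum>j\<in>UNIV. (a * x$i * x$j + (if i = j then b else 0)) * h$j) = a * (x \<bullet> h) * x$i + b * h$i" for i
  proof -
    have "(\<Sum>j\<in>UNIV. (a * x$i * x$j + (if i = j then b else 0)) * h$j)
        = (\<Sum>j\<in>UNIV. (a * x$i) * (x$j * h$j)) + (\<Sum>j\<in>UNIV. (if i = j then b * h$j else 0))"
      by (subst sum.distrib[symmetric]) (auto intro!: sum.cong simp: algebra_simps)
    also have "\<dots> = a * x$i * (x \<bullet> h) + b * h$i"
      by (simp add: sum_distrib_left[symmetric] inner_vec_def)
    finally show ?thesis by simp
  qed
  then show ?thesis by (simp add: vec_eq_iff matrix_vector_mult_def)
qed

lemma trace_rank_one_plus_diag:
  fixes x :: "real^'n" and a b :: real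
  shows "trace_mat ((\<chi> i j. a * x$i * x$j + (if i = j then b else 0)) :: real^'n^'n) = a * (norm x)^2 + CARD('n) * b"
proof -
  have "trace_mat ((\<chi> i j. a * x$i * x$j + (if i = j then b else 0)) :: real^'n^'n)
      = a * (\<Sum>i\<in>UNIV. x$i * x$i) + CARD('n) * b"
    unfolding trace_mat_def by (simp add: sum.distrib sum_distrib_left mult.assoc)
  also have "(\<Sum>i\<in>UNIV. x$i * x$i) = (norm x)^2"
    by (simp add: power2_norm_eq_inner inner_vec_def)
  finally show ?thesis .
qed

lemma trace_radial_hessian:
  "trace_mat (radial_hessian V1 V2 c (x::real^'n)) = (if x = 0 then real CARD('n) * c
     else V2 (norm x) + (real CARD('n) - 1) * (V1 (norm x) / norm x))"
  using trace_rank_one_plus_diag[of "(V2 (norm x) - V1 (norm x) / norm x) / (norm x)^2" x]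
  by (auto simp: radial_hessian_def field_simps power2_eq_square)

lemma norm_radial_grad: "x \<noteq> 0 \<Longrightarrow> norm (radial_grad V1 x) = \<bar>V1 (norm x)\<bar>"
  by (simp add: radial_grad_def abs_div)

lemma filterlim_norm_at_right_0: "filterlim (norm :: 'a::real_normed_vector \<Rightarrow> real) (at_right 0) (at 0)"
  unfolding filterlim_at
proof
  show "\<forall>\<^sub>F z in at 0. norm (z::'a) \<in> {0<..} \<and> norm z \<noteq> 0"
    unfolding eventually_at_filter by (intro always_eventually) auto
  show "(norm \<longlongrightarrow> 0) (at (0::'a))"
    using tendsto_norm[OF tendsto_ident_at[of "0::'a" UNIV]] by simp
qed

lemma has_derivative_radial:
  fixes x :: "real^'n"
  assumes x: "x \<noteq> 0" and V: "(V has_real_derivative V1 (norm x)) (at (norm x))"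
  shows "(radial V has_derivative (\<lambda>h. radial_grad V1 x \<bullet> h)) (at x)"
proof -
  have "((\<lambda>y. V (norm y)) has_derivative (\<lambda>h. V1 (norm x) * (h \<bullet> sgn x))) (at x)"
    using has_derivative_compose[OF has_derivative_norm[OF x] V[unfolded has_field_derivative_def]] by simp
  moreover have "(\<lambda>h. V1 (norm x) * (h \<bullet> sgn x)) = (\<lambda>h. radial_grad V1 x \<bullet> h)"
    using x by (auto simp: fun_eq_iff radial_grad_def sgn_div_norm inner_commute divide_inverse ac_simps)
  ultimately show ?thesis unfolding radial_def[abs_def] by simp
qed

lemma has_derivative_radial_0:
  assumes "((\<lambda>r. (V r - V 0) / r) \<longlongrightarrow> 0) (at_right 0)"
  shows "(radial V has_derivative (\<lambda>h. radial_grad V1 (0::real^'n) \<bullet> h)) (at 0)"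
proof -
  have "((\<lambda>y::real^'n. \<bar>(V (norm y) - V 0) / norm y\<bar>) \<longlongrightarrow> 0) (at 0)"
    using tendsto_rabs_zero[OF filterlim_compose[OF assms filterlim_norm_at_right_0]] .
  then show ?thesis by (simp add: has_derivative_at radial_def radial_grad_def abs_div)
qed

lemma has_derivative_radial_grad:
  fixes x :: "real^'n"
  assumes x: "x \<noteq> 0" and V1: "(V1 has_real_derivative V2 (norm x)) (at (norm x))"
  shows "(radial_grad V1 has_derivative (\<lambda>h. radial_hessian V1 V2 c x *v h)) (at x)"
proof -
  define r where "r = norm x"
  have r: "0 < r" using x by (simp add: r_def)
  have "((\<lambda>s. V1 s / s) has_real_derivative (V2 r * r - V1 r) / (r * r)) (at r)"
    using DERIV_divide[OF V1[folded r_def] DERIV_ident] r by simp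
  then have "((\<lambda>y. V1 (norm y) / norm y) has_derivative (\<lambda>h. (V2 r * r - V1 r) / (r * r) * (h \<bullet> sgn x))) (at x)"
    using has_derivative_compose[OF has_derivative_norm[OF x]] unfolding has_field_derivative_def r_def by blast
  from has_derivative_scaleR[OF this has_derivative_ident]
  have "(radial_grad V1 has_derivative
      (\<lambda>h. (V1 r / r) *\<^sub>R h + ((V2 r * r - V1 r) / (r * r) * (h \<bullet> sgn x)) *\<^sub>R x)) (at x)"
    unfolding radial_grad_def[abs_def] r_def .
  moreover have "radial_hessian V1 V2 c x
      = (\<chi> i j. (V2 r - V1 r / r) / r^2 * x$i * x$j + (if i = j then V1 r / r else 0))"
    using x unfolding r_def by (simp add: radial_hessian_def)
  then have "(V1 r / r) *\<^sub>R h + ((V2 r * r - V1 r) / (r * r) * (h \<bullet> sgn x)) *\<^sub>R x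
      = radial_hessian V1 V2 c x *v h" for h
    using r rank_one_plus_diag_mult_vec[of "(V2 r - V1 r / r) / r^2" x "V1 r / r" h]
    by (simp add: r_def[symmetric] sgn_div_norm inner_commute field_simps power2_eq_square)
  ultimately show ?thesis by simp
qed

lemma has_derivative_radial_grad_0:
  assumes "((\<lambda>r. V1 r / r) \<longlongrightarrow> c) (at_right 0)"
  shows "(radial_grad V1 has_derivative (\<lambda>h. radial_hessian V1 V2 c (0::real^'n) *v h)) (at 0)"
proof -
  have hess0: "radial_hessian V1 V2 c (0::real^'n) *v h = c *\<^sub>R h" for h
    using rank_one_plus_diag_mult_vec[of _ "0::real^'n" c h] by (simp add: radial_hessian_def)
  have lim: "((\<lambda>y::real^'n. V1 (norm y) / norm y - c) \<longlongrightarrow> 0) (at 0)"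
    using LIM_zero[OF filterlim_compose[OF assms filterlim_norm_at_right_0]] .
  have "norm (norm (radial_grad V1 h - radial_grad V1 0 - c *\<^sub>R h) / norm h)
      \<le> \<bar>V1 (norm h) / norm h - c\<bar>" for h :: "real^'n"
  proof -
    have "radial_grad V1 h - radial_grad V1 0 - c *\<^sub>R h = (V1 (norm h) / norm h - c) *\<^sub>R h"
      by (simp add: radial_grad_def algebra_simps)
    then show ?thesis by (cases "h = 0") simp_all
  qed
  then have "((\<lambda>h::real^'n. norm (radial_grad V1 h - radial_grad V1 0 - c *\<^sub>R h) / norm h) \<longlongrightarrow> 0) (at 0)"
    by (intro Lim_null_comparison[OF always_eventually tendsto_rabs_zero[OF lim]]) auto
  then show ?thesis by (simp add: has_derivative_at hess0 bounded_linear_scaleR_right)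
qed

lemma isCont_radial_hessian:
  fixes x :: "real^'n"
  assumes x: "x \<noteq> 0" and V1: "isCont V1 (norm x)" and V2: "isCont V2 (norm x)"
  shows "isCont (radial_hessian V1 V2 c) x"
proof -
  define H where "H y = (\<chi> i j. (V2 (norm y) - V1 (norm y) / norm y) / (norm y)^2 * y$i * y$j
      + (if i = j then V1 (norm y) / norm y else 0))" for y :: "real^'n"
  have "\<forall>\<^sub>F y in nhds x. y \<noteq> 0" using eventually_nhds_in_open[of "-{0}" x] x by auto
  moreover have "H y = radial_hessian V1 V2 c y" if "y \<noteq> 0" for y
    using that by (simp add: H_def radial_hessian_def)
  ultimately have "\<forall>\<^sub>F y in nhds x. H y = radial_hessian V1 V2 c y" by (auto elim: eventually_mono)
  moreover have "isCont H x"
  proof -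
    have n: "((\<lambda>y. norm y) \<longlongrightarrow> norm x) (at x)" by (intro tendsto_intros)
    note V = isCont_tendsto_compose[OF V1 n] isCont_tendsto_compose[OF V2 n]
    have diag: "((\<lambda>y. if i = j then V1 (norm y) / norm y else 0) \<longlongrightarrow> (if i = j then V1 (norm x) / norm x else 0)) (at x)"
      for i j using x by (cases "i = j") (auto intro!: tendsto_intros V)
    show ?thesis unfolding isCont_def H_def using x by (intro tendsto_vec_lambda tendsto_add diag tendsto_intros V) auto
  qed
  ultimately show ?thesis using isCont_cong by blast
qed

lemma isCont_radial_hessian_0:
  assumes l1: "((\<lambda>r. V1 r / r) \<longlongrightarrow> c) (at_right 0)" and l2: "(V2 \<longlongrightarrow> c) (at_right 0)"
  shows "isCont (radial_hessian V1 V2 c) (0::real^'n)"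
proof -
  have D: "((\<lambda>y::real^'n. V2 (norm y) - V1 (norm y) / norm y) \<longlongrightarrow> 0) (at 0)"
    using filterlim_compose[OF tendsto_diff[OF l2 l1] filterlim_norm_at_right_0] by simp
  have "\<bar>(V2 (norm y) - V1 (norm y) / norm y) / (norm y)^2 * y$i * y$j\<bar> \<le> \<bar>V2 (norm y) - V1 (norm y) / norm y\<bar>"
    for y :: "real^'n" and i j
  proof (cases "y = 0")
    case False
    let ?A = "V2 (norm y) - V1 (norm y) / norm y"
    have "\<bar>y$i\<bar> * \<bar>y$j\<bar> \<le> (norm y)^2"
      using mult_mono[OF component_le_norm_cart component_le_norm_cart] by (simp add: power2_eq_square)
    then have "\<bar>?A\<bar> * (\<bar>y$i\<bar> * \<bar>y$j\<bar>) \<le> \<bar>?A\<bar> * (norm y)^2" by (rule mult_left_mono) simp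
    then show ?thesis using False by (simp add: abs_mult abs_div divide_le_eq mult_ac)
  qed simp
  then have rank1: "((\<lambda>y::real^'n. (V2 (norm y) - V1 (norm y) / norm y) / (norm y)^2 * y$i * y$j) \<longlongrightarrow> 0) (at 0)"
    for i j by (intro Lim_null_comparison[OF always_eventually tendsto_rabs_zero[OF D]]) auto
  have "\<forall>\<^sub>F y in at (0::real^'n). V1 (norm y) / norm y = (if y = 0 then c else V1 (norm y) / norm y)"
    by (simp add: eventually_at_filter)
  from iffD1[OF tendsto_cong[OF this] filterlim_compose[OF l1 filterlim_norm_at_right_0]]
  have "((\<lambda>y::real^'n. if y = 0 then c else V1 (norm y) / norm y) \<longlongrightarrow> c) (at 0)" .
  then have diag: "((\<lambda>y::real^'n. if i = j then (if y = 0 then c else V1 (norm y) / norm y) else 0)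
      \<longlongrightarrow> (if i = j then c else 0)) (at 0)" for i j
    by (cases "i = j") auto
  have "(radial_hessian V1 V2 c \<longlongrightarrow> (\<chi> i j. 0 + (if i = j then c else 0))) (at (0::real^'n))"
    unfolding radial_hessian_def by (intro tendsto_vec_lambda tendsto_add rank1 diag)
  then show ?thesis by (simp add: isCont_def radial_hessian_def)
qed

lemma radial_C2_profile_has_derivative:
  assumes V: "radial_C2_profile R V V1 V2 c" and x: "(x::real^'n) \<in> ball 0 R"
  shows "(radial V has_derivative (\<lambda>h. radial_grad V1 x \<bullet> h)) (at x)"
    and "(radial_grad V1 has_derivative (\<lambda>h. radial_hessian V1 V2 c x *v h)) (at x)"
proof -
  have "(radial V has_derivative (\<lambda>h. radial_grad V1 x \<bullet> h)) (at x)
      \<and> (radial_grad V1 has_derivative (\<lambda>h. radial_hessian V1 V2 c x *v h)) (at x)"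
  proof (cases "x = 0")
    case True
    then show ?thesis
      using V has_derivative_radial_0 has_derivative_radial_grad_0 by (auto simp: radial_C2_profile_def)
  next
    case False
    then have "norm x \<in> {0<..<R}" using x by auto
    then show ?thesis using V has_derivative_radial[OF False] has_derivative_radial_grad[OF False]
      by (auto simp: radial_C2_profile_def)
  qed
  then show "(radial V has_derivative (\<lambda>h. radial_grad V1 x \<bullet> h)) (at x)"
    and "(radial_grad V1 has_derivative (\<lambda>h. radial_hessian V1 V2 c x *v h)) (at x)" by auto
qed

lemma radial_C2_profile_continuous_on_hessian:
  assumes V: "radial_C2_profile R V V1 V2 c"
  shows "continuous_on (ball 0 R) (radial_hessian V1 V2 c :: real^'n \<Rightarrow> real^'n^'n)"
proof (intro continuous_at_imp_continuous_on ballI)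
  fix x :: "real^'n" assume x: "x \<in> ball 0 R"
  show "isCont (radial_hessian V1 V2 c) x"
  proof (cases "x = 0")
    case True
    then show ?thesis using V isCont_radial_hessian_0 by (auto simp: radial_C2_profile_def)
  next
    case False
    then have "norm x \<in> {0<..<R}" using x by auto
    with V have "(V1 has_real_derivative V2 (norm x)) (at (norm x))" "isCont V2 (norm x)"
      by (auto simp: radial_C2_profile_def)
    then show ?thesis using isCont_radial_hessian[OF False] DERIV_isCont by blast
  qed
qed

lemma radial_C2_profile_continuous_on:
  assumes V: "radial_C2_profile R V V1 V2 c" and R: "0 < R" and lim: "(V \<longlongrightarrow> V R) (at_left R)"
  shows "continuous_on {0..R} V"
proof (rule continuous_on_IccI[OF _ lim _ R])
  have "((\<lambda>r. (V r - V 0) / r * r) \<longlongrightarrow> 0 * 0) (at_right 0)"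
    using V by (intro tendsto_intros) (simp add: radial_C2_profile_def)
  moreover have "\<forall>\<^sub>F r in at_right 0. (V r - V 0) / r * r = V r - V 0"
    using eventually_at_right_less[of "0::real"] by (rule eventually_mono) simp
  ultimately have "((\<lambda>r. V r - V 0) \<longlongrightarrow> 0) (at_right 0)" by (simp add: tendsto_cong)
  then show "(V \<longlongrightarrow> V 0) (at_right 0)" by (simp add: LIM_zero_iff)
  show "V \<midarrow>x\<rightarrow> V x" if "0 < x" "x < R" for x
  proof -
    have "(V has_real_derivative V1 x) (at x)" using V that by (simp add: radial_C2_profile_def)
    then show ?thesis by (rule DERIV_isCont[unfolded isCont_def])
  qed
qed

lemma continuous_on_cball_radial:
  assumes "continuous_on {0..R} V"
  shows "continuous_on (cball 0 R) (radial V :: real^'n \<Rightarrow> real)"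
  unfolding radial_def[abs_def] by (rule continuous_on_compose2[OF assms continuous_on_norm_id]) auto

section \<open>The radial integral equation\<close>

locale radial_problem =
  fixes g g' p :: "real \<Rightarrow> real" and R \<mu> :: real and N :: nat
  assumes N_ge_2: "N \<ge> 2"
    and g_has_deriv: "\<And>t. t > 0 \<Longrightarrow> (g has_real_derivative g' t) (at t)"
    and g'_cont: "continuous_on {0<..} g'"
    and g_positive: "\<And>t. t > 0 \<Longrightarrow> g t > 0"
    and g_antimono: "\<And>s t. 0 < s \<Longrightarrow> s \<le> t \<Longrightarrow> g t \<le> g s"
    and p_positive: "\<And>t. t > 0 \<Longrightarrow> p t > 0"
    and p_antimono: "\<And>s t. 0 < s \<Longrightarrow> s \<le> t \<Longrightarrow> p t \<le> p s"
    and p_cont: "continuous_on {0<..} p"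
    and R_positive: "R > 0"
    and mu_positive: "\<mu> > 0"
    and tp_integrable: "(\<lambda>t. t * p t) integrable_on {0..1}"
begin

text \<open>Integrating factor of the radial operator: \<open>(\<rho> v')' = \<rho> (v'' + ((N - 1) / t - \<mu>) v')\<close>.\<close>
definition rho :: "real \<Rightarrow> real" where "rho t = t ^ (N - 1) * exp (- \<mu> * t)"

lemma rho_pos: "t > 0 \<Longrightarrow> rho t > 0"
  by (simp add: rho_def)

lemma rho_nonneg: "t \<ge> 0 \<Longrightarrow> rho t \<ge> 0"
  by (simp add: rho_def)

lemma rho_0 [simp]: "rho 0 = 0"
  using N_ge_2 by (simp add: rho_def)

lemma continuous_on_rho: "continuous_on S rho"
  unfolding rho_def by (intro continuous_intros)

lemma integrable_rho: "rho integrable_on {a..b}"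
  by (rule integrable_continuous_interval) (rule continuous_on_rho)

lemma mult_rho: "t * rho t = t ^ N * exp (- \<mu> * t)"
  using N_ge_2 by (simp add: rho_def power_eq_if)

lemma rho_has_derivative:
  assumes "t > 0"
  shows "(rho has_real_derivative rho t * ((real N - 1) / t - \<mu>)) (at t)"
proof -
  obtain k where k: "N = Suc (Suc k)" using N_ge_2 by (metis add_2_eq_Suc le_Suc_ex)
  have "rho = (\<lambda>t. t ^ Suc k * exp (- \<mu> * t))" unfolding rho_def fun_eq_iff by (simp add: k)
  moreover have "((\<lambda>t. t ^ Suc k * exp (- \<mu> * t)) has_real_derivative
      (real (Suc k) * t ^ k) * exp (- \<mu> * t) + t ^ (Suc k) * (exp (- \<mu> * t) * (- \<mu>))) (at t)"
    by (intro derivative_eq_intros) auto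
  moreover have "(real (Suc k) * t ^ k) * exp (- \<mu> * t) + t ^ (Suc k) * (exp (- \<mu> * t) * (- \<mu>))
     = rho t * ((real N - 1) / t - \<mu>)"
    using assms unfolding rho_def by (simp add: field_simps k)
  ultimately show ?thesis by simp
qed

lemma rho_le:
  assumes "0 \<le> t" "t \<le> s"
  shows "rho t \<le> exp (\<mu> * s) * rho s"
proof -
  have "t ^ (N - 1) \<le> s ^ (N - 1)" using assms by (simp add: power_mono)
  moreover have "exp (- \<mu> * t) \<le> 1" using assms mu_positive by simp
  moreover have "exp (\<mu> * s) * exp (- \<mu> * s) = 1" by (simp add: exp_minus_inverse)
  ultimately show ?thesis unfolding rho_def
    by (smt (verit, best) assms mult_left_le mult_nonneg_nonneg zero_le_power exp_ge_zero
        mult.assoc mult.commute mult_le_cancel_left1 order_trans)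
qed

lemma rho_le_power: "0 \<le> t \<Longrightarrow> rho t \<le> t ^ (N - 1)"
  unfolding rho_def using mu_positive by (simp add: mult_left_le)

lemma integral_rho_le:
  assumes "0 \<le> s"
  shows "integral {0..s} rho \<le> s * exp (\<mu> * s) * rho s"
proof -
  have "integral {0..s} rho \<le> integral {0..s} (\<lambda>t. exp (\<mu> * s) * rho s)"
    by (rule integral_le) (auto intro: integrable_rho rho_le)
  then show ?thesis using assms by (simp add: mult_ac)
qed

lemma integral_rho_ge:
  assumes s: "0 \<le> s"
  shows "s ^ N / N * exp (- \<mu> * s) \<le> integral {0..s} rho"
proof -
  have I: "((\<lambda>t. t ^ (N - 1) * exp (- \<mu> * s)) has_integral s ^ N / N * exp (- \<mu> * s)) {0..s}"
    using has_integral_mult_left[OF has_integral_power_Icc0[OF s]] N_ge_2 by simp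
  have "integral {0..s} (\<lambda>t. t ^ (N - 1) * exp (- \<mu> * s)) \<le> integral {0..s} rho"
  proof (rule integral_le[OF integrable_continuous_interval integrable_rho])
    show "continuous_on {0..s} (\<lambda>t. t ^ (N - 1) * exp (- \<mu> * s))" by (intro continuous_intros)
    show "t ^ (N - 1) * exp (- \<mu> * s) \<le> rho t" if "t \<in> {0..s}" for t
      using that mu_positive unfolding rho_def by (intro mult_left_mono) auto
  qed
  then show ?thesis unfolding integral_unique[OF I] .
qed

lemma isCont_p: "t > 0 \<Longrightarrow> isCont p t"
  using p_cont continuous_on_eq_continuous_at[of "{0<..}" p] by auto

lemma isCont_g: "t > 0 \<Longrightarrow> isCont g t"
  using g_has_deriv DERIV_isCont by blast

lemma continuous_on_p_reflect: "r < R \<Longrightarrow> continuous_on {0..r} (\<lambda>t. p (R - t))"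
  by (intro continuous_at_imp_continuous_on ballI continuous_intros isCont_o2[OF _ isCont_p]) auto

lemma p_reflect_bounds: "r < R \<Longrightarrow> t \<in> {0..r} \<Longrightarrow> 0 < p (R - t) \<and> p (R - t) \<le> p (R - r)"
  using p_antimono[of "R - r" "R - t"] p_positive[of "R - t"] by auto

lemma
  assumes r: "0 \<le> r" and hi: "(\<lambda>t. rho t * h t) integrable_on {0..r}"
    and hb: "\<And>t. t \<in> {0..r} \<Longrightarrow> \<bar>h t\<bar> \<le> C"
  shows rho_average_bound: "\<And>s. s \<in> {0..r} \<Longrightarrow> \<bar>integral {0..s} (\<lambda>t. rho t * h t) / rho s\<bar> \<le> C * s * exp (\<mu> * s)"
    and continuous_on_rho_average: "continuous_on {0..r} (\<lambda>s. integral {0..s} (\<lambda>t. rho t * h t) / rho s)"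
proof -
  show bnd: "\<bar>integral {0..s} (\<lambda>t. rho t * h t) / rho s\<bar> \<le> C * s * exp (\<mu> * s)" if s: "s \<in> {0..r}" for s
  proof (cases "s = 0")
    case False
    then have sp: "s > 0" using s by auto
    have nb: "norm (rho t * h t) \<le> C * rho t" if "t \<in> {0..s}" for t
      using hb[of t] that s rho_nonneg[of t] by (auto simp: abs_mult mult.commute intro: mult_right_mono)
    have i1: "(\<lambda>t. rho t * h t) integrable_on {0..s}"
      by (rule integrable_on_subinterval[OF hi]) (use s in auto)
    have i2: "(\<lambda>t. C * rho t) integrable_on {0..s}"
      by (intro integrable_continuous_interval continuous_intros continuous_on_rho)
    have "\<bar>integral {0..s} (\<lambda>t. rho t * h t)\<bar> \<le> integral {0..s} (\<lambda>t. C * rho t)"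
      using integral_norm_bound_integral[OF i1 i2 nb] by simp
    also have "\<dots> = C * integral {0..s} rho" by simp
    also have "\<dots> \<le> C * (s * exp (\<mu> * s) * rho s)"
    proof -
      have "C \<ge> 0" using hb[of 0] r by (auto intro: order_trans[OF abs_ge_zero])
      then show ?thesis using integral_rho_le[of s] sp by (auto intro: mult_left_mono)
    qed
    finally show ?thesis using rho_pos[OF sp] by (simp add: abs_div pos_divide_le_eq mult.assoc)
  qed simp
  show "continuous_on {0..r} (\<lambda>s. integral {0..s} (\<lambda>t. rho t * h t) / rho s)"
    unfolding continuous_on_eq_continuous_within
  proof
    fix s assume s: "s \<in> {0..r}"
    show "continuous (at s within {0..r}) (\<lambda>s. integral {0..s} (\<lambda>t. rho t * h t) / rho s)"
    proof (cases "s = 0")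
      case True
      have "\<forall>\<^sub>F x in at 0 within {0..r}. norm (integral {0..x} (\<lambda>t. rho t * h t) / rho x) \<le> C * x * exp (\<mu> * x)"
        unfolding eventually_at_filter real_norm_def by (intro always_eventually allI impI bnd) auto
      moreover have "((\<lambda>x. C * x * exp (\<mu> * x)) \<longlongrightarrow> 0) (at 0 within {0..r})"
        by (intro tendsto_eq_intros) auto
      ultimately have "((\<lambda>x. integral {0..x} (\<lambda>t. rho t * h t) / rho x) \<longlongrightarrow> 0) (at 0 within {0..r})"
        by (rule Lim_null_comparison)
      then show ?thesis using True by (simp add: continuous_within)
    next
      case False
      then have "rho s \<noteq> 0" using s rho_pos[of s] by simp
      moreover have "((\<lambda>x. integral {0..x} (\<lambda>t. rho t * h t)) \<longlongrightarrow> integral {0..s} (\<lambda>t. rho t * h t)) (at s within {0..r})"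
        using indefinite_integral_continuous_1[OF hi] s by (simp add: continuous_on_def)
      moreover have "(rho \<longlongrightarrow> rho s) (at s within {0..r})"
        using continuous_on_rho[of "{0..r}"] s by (simp add: continuous_on_def)
      ultimately show ?thesis unfolding continuous_within by (metis tendsto_divide)
    qed
  qed
qed

definition admissible :: "(real \<Rightarrow> real) \<Rightarrow> real \<Rightarrow> bool" where
  "admissible f C \<longleftrightarrow> continuous_on UNIV f \<and> antimono f \<and> (\<forall>x. 0 \<le> f x \<and> f x \<le> C)"

text \<open>For a nonincreasing profile \<open>v\<close> the radial equation reads
  \<open>(\<rho> v')' = - \<rho> (p (R - t) f (v) + 1)\<close>; \<open>flux\<close> is \<open>- \<rho> v'\<close> and \<open>slope\<close> is \<open>- v'\<close>.
  At \<open>0\<close>, where \<open>\<rho>\<close> vanishes, \<open>slope\<close> is \<open>0\<close> by the convention \<open>x / 0 = 0\<close>, which is also its limit.\<close>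
definition rhs :: "(real \<Rightarrow> real) \<Rightarrow> (real \<Rightarrow> real) \<Rightarrow> real \<Rightarrow> real" where
  "rhs f v t = p (R - t) * f (v t) + 1"

definition flux :: "(real \<Rightarrow> real) \<Rightarrow> (real \<Rightarrow> real) \<Rightarrow> real \<Rightarrow> real" where
  "flux f v s = integral {0..s} (\<lambda>t. rho t * rhs f v t)"

definition slope :: "(real \<Rightarrow> real) \<Rightarrow> (real \<Rightarrow> real) \<Rightarrow> real \<Rightarrow> real" where
  "slope f v s = flux f v s / rho s"

definition integral_op :: "(real \<Rightarrow> real) \<Rightarrow> real \<Rightarrow> (real \<Rightarrow> real) \<Rightarrow> real \<Rightarrow> real" where
  "integral_op f a v r = a - integral {0..r} (slope f v)"

definition is_solution :: "(real \<Rightarrow> real) \<Rightarrow> real \<Rightarrow> (real \<Rightarrow> real) \<Rightarrow> bool" where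
  "is_solution f a v \<longleftrightarrow> (\<forall>r\<in>{0..<R}. continuous_on {0..r} v \<and> v r = integral_op f a v r)"

lemma admissible_const: "0 \<le> C \<Longrightarrow> admissible (\<lambda>_. C) C"
  unfolding admissible_def by (auto intro: antimonoI)

lemma admissible_nonneg: "admissible f C \<Longrightarrow> 0 \<le> C"
  unfolding admissible_def by (auto intro: order_trans)

lemma rhs_bounds:
  assumes "admissible f C" "r < R" "t \<in> {0..r}"
  shows "1 \<le> rhs f v t" "rhs f v t \<le> p (R - r) * C + 1"
proof -
  have "0 \<le> f (v t)" "f (v t) \<le> C" using assms(1) unfolding admissible_def by auto
  moreover have "0 < p (R - t)" "p (R - t) \<le> p (R - r)" using p_reflect_bounds[OF assms(2,3)] by auto
  ultimately show "1 \<le> rhs f v t" "rhs f v t \<le> p (R - r) * C + 1"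
    unfolding rhs_def by (auto intro: mult_mono)
qed

lemma integrable_rho_rhs:
  assumes f: "admissible f C" and r: "0 \<le> r" "r < R" and v: "continuous_on {0..r} v"
  shows "(\<lambda>t. rho t * rhs f v t) integrable_on {0..r}"
proof -
  have "continuous_on {0..r} (\<lambda>t. f (v t))"
    using f continuous_on_compose2[OF _ v] unfolding admissible_def by blast
  then have "continuous_on {0..r} (\<lambda>t. rho t * rhs f v t)" unfolding rhs_def
    by (intro continuous_intros continuous_on_p_reflect r continuous_on_rho)
  then show ?thesis using integrable_continuous_interval by blast
qed

lemma
  assumes f: "admissible f C" and r: "0 \<le> r" "r < R"
    and hi: "(\<lambda>t. rho t * rhs f v t) integrable_on {0..r}"
  shows continuous_on_slope: "continuous_on {0..r} (slope f v)"
    and slope_bound: "\<And>s. s \<in> {0..r} \<Longrightarrow> \<bar>slope f v s\<bar> \<le> (p (R - r) * C + 1) * s * exp (\<mu> * s)"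
    and slope_nonneg: "\<And>s. s \<in> {0..r} \<Longrightarrow> 0 \<le> slope f v s"
proof -
  have hb: "\<bar>rhs f v t\<bar> \<le> p (R - r) * C + 1" if "t \<in> {0..r}" for t
    using rhs_bounds[OF f r(2) that, of v] by simp
  show "continuous_on {0..r} (slope f v)"
    using continuous_on_rho_average[OF r(1) hi hb] unfolding slope_def flux_def by simp
  show "\<bar>slope f v s\<bar> \<le> (p (R - r) * C + 1) * s * exp (\<mu> * s)" if "s \<in> {0..r}" for s
    using rho_average_bound[OF r(1) hi hb that] unfolding slope_def flux_def by simp
  show "0 \<le> slope f v s" if s: "s \<in> {0..r}" for s
  proof -
    have "0 \<le> flux f v s" unfolding flux_def
    proof (rule integral_nonneg)
      show "(\<lambda>t. rho t * rhs f v t) integrable_on {0..s}"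
        by (rule integrable_on_subinterval[OF hi]) (use s in auto)
      show "0 \<le> rho t * rhs f v t" if "t \<in> {0..s}" for t
        using rhs_bounds(1)[OF f r(2), of t v] rho_nonneg[of t] that s by auto
    qed
    then show ?thesis unfolding slope_def using rho_nonneg[of s] s by auto
  qed
qed

lemma integral_op_continuous_on:
  assumes "admissible f C" "0 \<le> r" "r < R" "(\<lambda>t. rho t * rhs f v t) integrable_on {0..r}"
  shows "continuous_on {0..r} (integral_op f a v)"
  unfolding integral_op_def
  by (intro continuous_intros indefinite_integral_continuous_1 integrable_continuous_interval
      continuous_on_slope[OF assms])

lemma integral_op_le:
  assumes f: "admissible f C" and r: "0 \<le> r" "r < R"
    and i: "(\<lambda>t. rho t * rhs f v t) integrable_on {0..r}"
  shows "integral_op f a v r \<le> a"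
  using integral_nonneg[OF integrable_continuous_interval[OF continuous_on_slope[OF f r i]]]
    slope_nonneg[OF f r i] unfolding integral_op_def by auto

lemma integral_op_antimono:
  assumes f1: "admissible f1 C1" and f2: "admissible f2 C2" and r: "0 \<le> r" "r < R"
    and i1: "(\<lambda>t. rho t * rhs f1 v1 t) integrable_on {0..r}"
    and i2: "(\<lambda>t. rho t * rhs f2 v2 t) integrable_on {0..r}"
    and le: "\<And>t. t \<in> {0..r} \<Longrightarrow> rhs f1 v1 t \<le> rhs f2 v2 t"
  shows "integral_op f2 a v2 r \<le> integral_op f1 a v1 r"
proof -
  have "slope f1 v1 s \<le> slope f2 v2 s" if s: "s \<in> {0..r}" for s
  proof -
    have "flux f1 v1 s \<le> flux f2 v2 s" unfolding flux_def
    proof (rule integral_le)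
      show "(\<lambda>t. rho t * rhs f1 v1 t) integrable_on {0..s}" "(\<lambda>t. rho t * rhs f2 v2 t) integrable_on {0..s}"
        using integrable_on_subinterval[OF i1] integrable_on_subinterval[OF i2] s by auto
      show "rho t * rhs f1 v1 t \<le> rho t * rhs f2 v2 t" if "t \<in> {0..s}" for t
        using le[of t] rho_nonneg[of t] that s by (intro mult_left_mono) auto
    qed
    then show ?thesis unfolding slope_def using rho_nonneg[of s] s by (intro divide_right_mono) auto
  qed
  then have "integral {0..r} (slope f1 v1) \<le> integral {0..r} (slope f2 v2)"
    using continuous_on_slope[OF f1 r i1] continuous_on_slope[OF f2 r i2]
    by (intro integral_le integrable_continuous_interval) auto
  then show ?thesis unfolding integral_op_def by simp
qed

subsection \<open>Existence for bounded nonlinearities\<close>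

lemma integral_op_tendsto:
  assumes f: "admissible f C" and r: "0 \<le> r" "r < R"
    and cont: "\<And>k. continuous_on {0..r} (vs k)"
    and lim: "\<And>t. t \<in> {0..r} \<Longrightarrow> (\<lambda>k. vs k t) \<longlonglongrightarrow> v t"
  shows "(\<lambda>t. rho t * rhs f v t) integrable_on {0..r}"
    and "(\<lambda>k. integral_op f a (vs k) r) \<longlonglongrightarrow> integral_op f a v r"
proof -
  let ?B = "p (R - r) * C + 1"
  have hik: "(\<lambda>t. rho t * rhs f (vs k) t) integrable_on {0..r}" for k
    using integrable_rho_rhs[OF f r cont] .
  have flux_lim: "(\<lambda>t. rho t * rhs f v t) integrable_on {0..s} \<and> (\<lambda>k. flux f (vs k) s) \<longlonglongrightarrow> flux f v s"
    if s: "s \<in> {0..r}" for s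
  proof -
    have le: "norm (rho t * rhs f (vs k) t) \<le> rho t * ?B" if "t \<in> {0..s}" for k t
      using rhs_bounds[OF f r(2), of t "vs k"] rho_nonneg[of t] that s by (simp add: abs_mult mult_left_mono)
    have fc: "continuous_on UNIV f" using f unfolding admissible_def by simp
    have cv: "(\<lambda>k. rho t * rhs f (vs k) t) \<longlonglongrightarrow> rho t * rhs f v t" if "t \<in> {0..s}" for t
      unfolding rhs_def using that s
      by (intro tendsto_intros continuous_on_tendsto_compose[OF fc lim]) auto
    have i1: "(\<lambda>t. rho t * rhs f (vs k) t) integrable_on {0..s}" for k
      by (rule integrable_on_subinterval[OF hik]) (use s in auto)
    have i2: "(\<lambda>t. rho t * ?B) integrable_on {0..s}"
      by (intro integrable_continuous_interval continuous_intros continuous_on_rho)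
    show ?thesis unfolding flux_def using dominated_convergence[OF i1 i2 le cv] by simp
  qed
  then show "(\<lambda>t. rho t * rhs f v t) integrable_on {0..r}" using r by auto
  have "(\<lambda>k. integral {0..r} (slope f (vs k))) \<longlonglongrightarrow> integral {0..r} (slope f v)"
  proof (rule dominated_convergence(2))
    show "slope f (vs k) integrable_on {0..r}" for k
      using continuous_on_slope[OF f r hik] integrable_continuous_interval by blast
    show "(\<lambda>s. ?B * s * exp (\<mu> * s)) integrable_on {0..r}"
      by (intro integrable_continuous_interval continuous_intros)
    show "norm (slope f (vs k) s) \<le> ?B * s * exp (\<mu> * s)" if "s \<in> {0..r}" for k s
      using slope_bound[OF f r hik that] by simp
    show "(\<lambda>k. slope f (vs k) s) \<longlonglongrightarrow> slope f v s" if "s \<in> {0..r}" for s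
      using tendsto_mult_right[OF conjunct2[OF flux_lim[OF that]], of "inverse (rho s)"]
      unfolding slope_def by (simp add: divide_inverse)
  qed
  then show "(\<lambda>k. integral_op f a (vs k) r) \<longlonglongrightarrow> integral_op f a v r"
    unfolding integral_op_def by (intro tendsto_intros)
qed

lemma
  fixes a :: real
  assumes f: "admissible f C" and r: "0 \<le> r" "r < R"
  defines "vs \<equiv> \<lambda>k. (integral_op f a ^^ k) (integral_op (\<lambda>_. C) a (\<lambda>_. 0))"
  shows continuous_on_iterates: "continuous_on {0..r} (vs k)"
    and iterates_mono: "t \<in> {0..r} \<Longrightarrow> vs k t \<le> vs (Suc k) t"
proof -
  have C: "admissible (\<lambda>_. C) C" using admissible_const[OF admissible_nonneg[OF f]] .
  have vs_Suc: "vs (Suc k) = integral_op f a (vs k)" for k by (simp add: vs_def)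
  have cont: "continuous_on {0..r'} (vs k)" if "0 \<le> r'" "r' < R" for k r'
  proof (induction k)
    case 0
    then show ?case unfolding vs_def
      using integral_op_continuous_on[OF C that integrable_rho_rhs[OF C that continuous_on_const]] by simp
  next
    case (Suc k)
    then show ?case unfolding vs_Suc
      using integral_op_continuous_on[OF f that integrable_rho_rhs[OF f that]] by blast
  qed
  then show "continuous_on {0..r} (vs k)" using r .
  have hik: "(\<lambda>t. rho t * rhs f (vs k) t) integrable_on {0..t}" if "t \<in> {0..r}" for k t
    using integrable_rho_rhs[OF f _ _ cont] that r by auto
  have "\<forall>t\<in>{0..r}. vs k t \<le> vs (Suc k) t"
  proof (induction k)
    case 0
    show ?case
    proof
      fix t assume t: "t \<in> {0..r}"
      have "rhs f (vs 0) s \<le> rhs (\<lambda>_. C) (\<lambda>_. 0) s" if "s \<in> {0..t}" for s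
        using f p_reflect_bounds[OF r(2), of s] that t unfolding rhs_def admissible_def
        by (auto intro!: mult_left_mono)
      moreover have "(\<lambda>s. rho s * rhs (\<lambda>_. C) (\<lambda>_. 0) s) integrable_on {0..t}"
        using integrable_rho_rhs[OF C _ _ continuous_on_const] t r by auto
      ultimately have "integral_op (\<lambda>_. C) a (\<lambda>_. 0) t \<le> integral_op f a (vs 0) t"
        using integral_op_antimono[OF f C _ _ hik[OF t, of 0]] t r by auto
      then show "vs 0 t \<le> vs (Suc 0) t" by (simp add: vs_def)
    qed
  next
    case (Suc k)
    show ?case
    proof
      fix t assume t: "t \<in> {0..r}"
      have "rhs f (vs (Suc k)) s \<le> rhs f (vs k) s" if "s \<in> {0..t}" for s
      proof -
        have "f (vs (Suc k) s) \<le> f (vs k s)"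
          using f Suc.IH that t unfolding admissible_def by (auto dest: antimonoD)
        then show ?thesis unfolding rhs_def using p_reflect_bounds[OF r(2), of s] that t
          by (auto intro!: mult_left_mono)
      qed
      then have "integral_op f a (vs k) t \<le> integral_op f a (vs (Suc k)) t"
        using integral_op_antimono[OF f f _ _ hik[OF t, of "Suc k"] hik[OF t, of k]] t r by auto
      then show "vs (Suc k) t \<le> vs (Suc (Suc k)) t" by (simp add: vs_Suc)
    qed
  qed
  then show "t \<in> {0..r} \<Longrightarrow> vs k t \<le> vs (Suc k) t" by blast
qed

lemma solution_exists:
  assumes f: "admissible f C"
  shows "\<exists>v. is_solution f a v"
proof -
  define vs where "vs k = (integral_op f a ^^ k) (integral_op (\<lambda>_. C) a (\<lambda>_. 0))" for k
  have cont: "continuous_on {0..r} (vs k)" if "0 \<le> r" "r < R" for k r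
    using continuous_on_iterates[OF f that] by (simp add: vs_def)
  have mono: "vs k r \<le> vs (Suc k) r" if "0 \<le> r" "r < R" for k r
    using iterates_mono[OF f that, of r] that by (simp add: vs_def)
  have bound: "vs k r \<le> max (vs 0 r) a" if "0 \<le> r" "r < R" for k r
  proof (cases k)
    case (Suc j)
    then show ?thesis
      using integral_op_le[OF f that integrable_rho_rhs[OF f that cont[OF that]], of a j] by (simp add: vs_def)
  qed simp
  define v where "v r = (SUP k. vs k r)" for r
  have lim: "(\<lambda>k. vs k t) \<longlonglongrightarrow> v t" if "t \<in> {0..r}" "r < R" for t r
    unfolding v_def using that bound[of t] mono[of t]
    by (intro LIMSEQ_incseq_SUP bdd_aboveI[of _ "max (vs 0 t) a"] incseq_SucI) auto
  have eq: "v r = integral_op f a v r" if r: "0 \<le> r" "r < R" for r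
  proof -
    have "(\<lambda>k. vs (Suc k) r) \<longlonglongrightarrow> integral_op f a v r"
      using integral_op_tendsto(2)[OF f r cont[OF r] lim[OF _ r(2)]] by (simp add: vs_def)
    then show ?thesis using LIMSEQ_unique[OF LIMSEQ_Suc[OF lim]] r by auto
  qed
  have "continuous_on {0..r} v" if r: "0 \<le> r" "r < R" for r
    using continuous_on_eq[OF integral_op_continuous_on[OF f r integral_op_tendsto(1)[OF f r cont[OF r] lim[OF _ r(2)]]]]
      eq r by auto
  with eq have "is_solution f a v" unfolding is_solution_def by auto
  then show ?thesis by blast
qed

lemma is_solution_continuous_on: "is_solution f a v \<Longrightarrow> 0 \<le> r \<Longrightarrow> r < R \<Longrightarrow> continuous_on {0..r} v"
  unfolding is_solution_def by auto

lemma is_solution_eq: "is_solution f a v \<Longrightarrow> 0 \<le> r \<Longrightarrow> r < R \<Longrightarrow> v r = a - integral {0..r} (slope f v)"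
  unfolding is_solution_def integral_op_def by auto

lemma is_solution_0: "is_solution f a v \<Longrightarrow> v 0 = a"
  using is_solution_eq[of f a v 0] R_positive by simp

lemma solution_integrable_rho_rhs:
  "admissible f C \<Longrightarrow> is_solution f a v \<Longrightarrow> 0 \<le> r \<Longrightarrow> r < R \<Longrightarrow> (\<lambda>t. rho t * rhs f v t) integrable_on {0..r}"
  using integrable_rho_rhs is_solution_continuous_on by blast

lemma solution_continuous_on_slope:
  "admissible f C \<Longrightarrow> is_solution f a v \<Longrightarrow> 0 \<le> r \<Longrightarrow> r < R \<Longrightarrow> continuous_on {0..r} (slope f v)"
  using continuous_on_slope solution_integrable_rho_rhs by blast

lemma solution_slope_nonneg:
  "admissible f C \<Longrightarrow> is_solution f a v \<Longrightarrow> 0 \<le> s \<Longrightarrow> s < R \<Longrightarrow> 0 \<le> slope f v s"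
  using slope_nonneg[of f C s v s] solution_integrable_rho_rhs[of f C a v s] by auto

lemma solution_has_derivative:
  assumes f: "admissible f C" and v: "is_solution f a v" and x: "0 < x" "x < R"
  shows "(v has_real_derivative - slope f v x) (at x)"
proof -
  define r where "r = (x + R) / 2"
  have r: "0 \<le> r" "r < R" "x < r" using x by (auto simp: r_def)
  have "((\<lambda>z. a - integral {0..z} (slope f v)) has_real_derivative 0 - slope f v x) (at x within {0..r})"
    using x r by (intro DERIV_diff DERIV_const integral_has_real_derivative solution_continuous_on_slope[OF f v]) auto
  then have "((\<lambda>z. a - integral {0..z} (slope f v)) has_real_derivative - slope f v x) (at x)"
    using at_within_Icc_at[of 0 x r] x r by simp
  then show ?thesis
    by (rule has_field_derivative_transform_within_open[of _ _ _ "{0<..<R}"])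
       (use x is_solution_eq[OF v] in auto)
qed

lemma solution_slope_ge:
  assumes f: "admissible f C" and v: "is_solution f a v" and x: "0 \<le> x" "x < R"
  shows "x / N \<le> slope f v x"
proof (cases "x = 0")
  case True then show ?thesis using solution_slope_nonneg[OF f v x] by simp
next
  case False
  then have xp: "x > 0" using x by auto
  have "integral {0..x} rho \<le> flux f v x" unfolding flux_def
  proof (rule integral_le[OF integrable_rho solution_integrable_rho_rhs[OF f v x]])
    show "rho t \<le> rho t * rhs f v t" if "t \<in> {0..x}" for t
      using rhs_bounds(1)[OF f x(2) that, of v] rho_nonneg[of t] that by (simp add: mult_le_cancel_left1)
  qed
  moreover have "x ^ N / N * exp (- \<mu> * x) = (x / N) * rho x"
    using mult_rho[of x] by simp
  ultimately have "(x / N) * rho x \<le> flux f v x" using integral_rho_ge[OF x(1)] by linarith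
  then show ?thesis unfolding slope_def using rho_pos[OF xp] by (simp add: pos_le_divide_eq)
qed

text \<open>The source term \<open>1\<close> alone forces the drop of \<open>a - t\<^sup>2 / (2N)\<close>, the solution of
  \<open>-\<Delta>u = 1\<close>.\<close>
lemma solution_drop:
  assumes f: "admissible f C" and v: "is_solution f a v" and t: "0 \<le> t" "t \<le> r" and r: "r < R"
  shows "v r \<le> v t - (r^2 - t^2) / (2 * N)"
proof -
  have qc: "continuous_on {0..r} (slope f v)" using solution_continuous_on_slope[OF f v _ r] t by simp
  have "((\<lambda>s. s / N) has_integral (r^2 / (2 * N) - t^2 / (2 * N))) {t..r}"
  proof (rule fundamental_theorem_of_calculus[OF t(2)])
    fix x assume "x \<in> {t..r}"
    have "((\<lambda>s. s^2 / (2 * N)) has_real_derivative (2 * x) / (2 * N)) (at x within {t..r})"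
      using N_ge_2 by (intro derivative_eq_intros) auto
    then show "((\<lambda>s. s^2 / (2 * N)) has_vector_derivative x / N) (at x within {t..r})"
      by (simp add: has_real_derivative_iff_has_vector_derivative)
  qed
  then have "(r^2 - t^2) / (2 * N) \<le> integral {t..r} (slope f v)"
    using solution_slope_ge[OF f v] qc t r
    by (auto simp: diff_divide_distrib intro!: has_integral_le[OF _ integrable_integral]
        integrable_continuous_interval intro: continuous_on_subset)
  moreover have "integral {0..t} (slope f v) + integral {t..r} (slope f v) = integral {0..r} (slope f v)"
    by (rule Henstock_Kurzweil_Integration.integral_combine[OF t integrable_continuous_interval[OF qc]])
  ultimately show ?thesis using is_solution_eq[OF v _ r] is_solution_eq[OF v t(1)] t r by simp
qed

lemma solution_antimono:
  assumes "admissible f C" "is_solution f a v" "0 \<le> t" "t \<le> r" "r < R"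
  shows "v r \<le> v t"
proof -
  have "0 \<le> (r^2 - t^2) / (2 * N)" using power_mono[of t r 2] assms(3,4) by simp
  then show ?thesis using solution_drop[OF assms] by linarith
qed

lemma solution_le_initial: "admissible f C \<Longrightarrow> is_solution f a v \<Longrightarrow> 0 \<le> r \<Longrightarrow> r < R \<Longrightarrow> v r \<le> a"
  using solution_antimono[of f C a v 0 r] is_solution_0[of f a v] by simp

subsection \<open>Comparison and Gronwall estimates\<close>

lemma solution_continuous_on_comp:
  "admissible f C \<Longrightarrow> is_solution f a v \<Longrightarrow> 0 \<le> r \<Longrightarrow> r < R \<Longrightarrow> continuous_on {0..r} (\<lambda>t. f (v t))"
  using continuous_on_compose2[OF _ is_solution_continuous_on] unfolding admissible_def by blast

lemma
  assumes f1: "admissible f1 C1" and f2: "admissible f2 C2" and v: "is_solution f1 a v" and w: "is_solution f2 b w"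
    and x: "0 \<le> x" "x < R"
  shows integrable_slope_diff: "(\<lambda>t. rho t * p (R - t) * (f1 (v t) - f2 (w t))) integrable_on {0..x}"
    and slope_diff: "slope f1 v x - slope f2 w x = integral {0..x} (\<lambda>t. rho t * p (R - t) * (f1 (v t) - f2 (w t))) / rho x"
proof -
  show "(\<lambda>t. rho t * p (R - t) * (f1 (v t) - f2 (w t))) integrable_on {0..x}"
    by (intro integrable_continuous_interval continuous_intros continuous_on_rho continuous_on_p_reflect
        solution_continuous_on_comp[OF f1 v x] solution_continuous_on_comp[OF f2 w x] x)
  have "flux f1 v x - flux f2 w x = integral {0..x} (\<lambda>t. rho t * rhs f1 v t - rho t * rhs f2 w t)"
    unfolding flux_def using solution_integrable_rho_rhs[OF f1 v x] solution_integrable_rho_rhs[OF f2 w x]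
    by (simp add: Henstock_Kurzweil_Integration.integral_diff)
  also have "\<dots> = integral {0..x} (\<lambda>t. rho t * p (R - t) * (f1 (v t) - f2 (w t)))"
    unfolding rhs_def by (simp add: algebra_simps)
  finally show "slope f1 v x - slope f2 w x = integral {0..x} (\<lambda>t. rho t * p (R - t) * (f1 (v t) - f2 (w t))) / rho x"
    unfolding slope_def by (metis diff_divide_distrib)
qed

lemma slope_diff_nonneg:
  assumes f1: "admissible f1 C1" and f2: "admissible f2 C2" and v: "is_solution f1 a v" and w: "is_solution f2 b w"
    and x: "0 \<le> x" "x < R" and le: "\<And>t. t \<in> {0..x} \<Longrightarrow> f2 (w t) \<le> f1 (v t)"
  shows "0 \<le> slope f1 v x - slope f2 w x"
proof -
  have "0 \<le> integral {0..x} (\<lambda>t. rho t * p (R - t) * (f1 (v t) - f2 (w t)))"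
  proof (rule integral_nonneg[OF integrable_slope_diff[OF f1 f2 v w x]])
    show "0 \<le> rho t * p (R - t) * (f1 (v t) - f2 (w t))" if "t \<in> {0..x}" for t
      using rho_nonneg[of t] p_reflect_bounds[OF x(2) that] le[OF that] that by simp
  qed
  then show ?thesis unfolding slope_diff[OF f1 f2 v w x] using rho_nonneg[of x] x by simp
qed

text \<open>As long as \<open>v \<le> w\<close>, the slope of \<open>v\<close> dominates that of \<open>w\<close>, so the gap can only grow;
  hence the solutions never cross.\<close>
lemma solution_gap_ge:
  assumes f1: "admissible f1 C1" and f2: "admissible f2 C2" and v: "is_solution f1 a v" and w: "is_solution f2 b w"
    and ab: "a < b" and f12: "\<And>x y. x \<le> y \<Longrightarrow> f2 y \<le> f1 x" and r: "0 \<le> r" "r < R"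
  shows "b - a \<le> w r - v r"
proof -
  have gap: "b - a \<le> w x - v x" if x: "0 \<le> x" "x < R" and le: "\<And>t. t \<in> {0..x} \<Longrightarrow> v t \<le> w t" for x
  proof -
    have "0 \<le> integral {0..x} (\<lambda>s. slope f1 v s - slope f2 w s)"
    proof (rule integral_nonneg)
      show "(\<lambda>s. slope f1 v s - slope f2 w s) integrable_on {0..x}"
        by (intro integrable_continuous_interval continuous_on_diff
            solution_continuous_on_slope[OF f1 v x] solution_continuous_on_slope[OF f2 w x])
      show "0 \<le> slope f1 v s - slope f2 w s" if s: "s \<in> {0..x}" for s
        by (rule slope_diff_nonneg[OF f1 f2 v w]) (use s x le f12 in auto)
    qed
    moreover have "w x - v x = (b - a) + integral {0..x} (\<lambda>s. slope f1 v s - slope f2 w s)"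
      using is_solution_eq[OF v x] is_solution_eq[OF w x]
        Henstock_Kurzweil_Integration.integral_diff[OF
          integrable_continuous_interval[OF solution_continuous_on_slope[OF f1 v x]]
          integrable_continuous_interval[OF solution_continuous_on_slope[OF f2 w x]]]
      by simp
    ultimately show ?thesis by simp
  qed
  show ?thesis
  proof (cases "\<forall>t\<in>{0..r}. 0 < w t - v t")
    case True
    then have "v t \<le> w t" if "t \<in> {0..r}" for t using that by force
    then show ?thesis by (rule gap[OF r])
  next
    case False
    then obtain t where t: "t \<in> {0..r}" "w t - v t \<le> 0" by auto
    have cont: "continuous_on {0..r} (\<lambda>t. w t - v t)"
      by (intro continuous_on_diff is_solution_continuous_on[OF v r] is_solution_continuous_on[OF w r])
    have start: "0 < w 0 - v 0" using ab is_solution_0[OF v] is_solution_0[OF w] by simp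
    obtain t1 where t1: "t1 \<in> {0..r}" "w t1 - v t1 = 0" "\<And>s. s \<in> {0..<t1} \<Longrightarrow> 0 < w s - v s"
      using continuous_first_crossing[where h="\<lambda>t. w t - v t" and a=0 and b=r and c=0, OF cont start t]
      by blast
    have "v s \<le> w s" if "s \<in> {0..t1}" for s
      using t1(2) t1(3)[of s] that by (cases "s = t1") auto
    then have "b - a \<le> w t1 - v t1" using t1(1) r by (intro gap) auto
    then show ?thesis using t1(2) ab by simp
  qed
qed

definition pslope :: "real \<Rightarrow> real" where
  "pslope s = integral {0..s} (\<lambda>t. rho t * p (R - t)) / rho s"

definition pslope_integral :: "real \<Rightarrow> real" where
  "pslope_integral r = integral {0..r} pslope"

lemma continuous_on_pslope:
  assumes "0 \<le> r" "r < R"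
  shows "continuous_on {0..r} pslope"
proof -
  have "\<bar>p (R - t)\<bar> \<le> p (R - r)" if "t \<in> {0..r}" for t
    using p_reflect_bounds[OF assms(2) that] by simp
  then show ?thesis unfolding pslope_def[abs_def]
    by (intro continuous_on_rho_average[OF assms(1)] integrable_continuous_interval continuous_intros
        continuous_on_rho continuous_on_p_reflect assms(2))
qed

lemma pslope_nonneg:
  assumes "0 \<le> s" "s < R"
  shows "0 \<le> pslope s"
proof -
  have "0 \<le> integral {0..s} (\<lambda>t. rho t * p (R - t))"
  proof (rule integral_nonneg)
    show "(\<lambda>t. rho t * p (R - t)) integrable_on {0..s}"
      by (intro integrable_continuous_interval continuous_intros continuous_on_rho continuous_on_p_reflect assms)
    show "0 \<le> rho t * p (R - t)" if "t \<in> {0..s}" for t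
      using rho_nonneg[of t] p_reflect_bounds[OF assms(2) that] that by simp
  qed
  then show ?thesis unfolding pslope_def using rho_nonneg[of s] assms by simp
qed

lemma pslope_integral_has_derivative:
  assumes x: "0 < x" "x < R"
  shows "(pslope_integral has_real_derivative pslope x) (at x)"
proof -
  define r where "r = (x + R) / 2"
  have r: "0 \<le> r" "r < R" "x < r" using x by (auto simp: r_def)
  have "(pslope_integral has_real_derivative pslope x) (at x within {0..r})"
    unfolding pslope_integral_def[abs_def]
    by (rule integral_has_real_derivative[OF continuous_on_pslope[OF r(1,2)]]) (use x r in auto)
  then show ?thesis using at_within_Icc_at[of 0 x r] x r by simp
qed

lemma continuous_on_pslope_integral: "0 \<le> r \<Longrightarrow> r < R \<Longrightarrow> continuous_on {0..r} pslope_integral"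
  unfolding pslope_integral_def[abs_def]
  by (intro indefinite_integral_continuous_1 integrable_continuous_interval continuous_on_pslope)

lemma slope_diff_le:
  assumes f1: "admissible f1 C1" and f2: "admissible f2 C2" and v: "is_solution f1 a v" and w: "is_solution f2 b w"
    and x: "0 \<le> x" "x < R" and le: "\<And>t. t \<in> {0..x} \<Longrightarrow> f1 (v t) - f2 (w t) \<le> B"
  shows "slope f1 v x - slope f2 w x \<le> B * pslope x"
proof -
  have "integral {0..x} (\<lambda>t. rho t * p (R - t) * (f1 (v t) - f2 (w t)))
      \<le> integral {0..x} (\<lambda>t. B * (rho t * p (R - t)))"
  proof (rule integral_le[OF integrable_slope_diff[OF f1 f2 v w x]])
    show "(\<lambda>t. B * (rho t * p (R - t))) integrable_on {0..x}"
      by (intro integrable_continuous_interval continuous_intros continuous_on_rho continuous_on_p_reflect x)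
    show "rho t * p (R - t) * (f1 (v t) - f2 (w t)) \<le> B * (rho t * p (R - t))" if "t \<in> {0..x}" for t
      using rho_nonneg[of t] p_reflect_bounds[OF x(2) that] le[OF that] that
      by (simp add: mult.commute mult_right_mono)
  qed
  then show ?thesis unfolding slope_diff[OF f1 f2 v w x] pslope_def
    using rho_nonneg[of x] x by (simp add: divide_right_mono)
qed

text \<open>Gronwall's inequality for the gap \<open>w - v\<close>, whose derivative is at most \<open>K (w - v) pslope\<close>.\<close>
lemma solution_gap_le:
  assumes f1: "admissible f1 C1" and f2: "admissible f2 C2" and v: "is_solution f1 a v" and w: "is_solution f2 b w"
    and r: "0 \<le> r" "r < R" and K: "0 \<le> K"
    and vw: "\<And>t. t \<in> {0..r} \<Longrightarrow> v t \<le> w t"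
    and lip: "\<And>t. t \<in> {0..r} \<Longrightarrow> 0 \<le> f1 (v t) - f2 (w t) \<and> f1 (v t) - f2 (w t) \<le> K * (w t - v t)"
  shows "w r - v r \<le> (b - a) * exp (K * pslope_integral r)"
proof -
  define d where "d t = w t - v t" for t
  define d' where "d' t = slope f1 v t - slope f2 w t" for t
  have d_deriv: "(d has_real_derivative d' x) (at x)" if "0 < x" "x < R" for x
    using DERIV_diff[OF solution_has_derivative[OF f2 w that] solution_has_derivative[OF f1 v that]]
    unfolding d_def[abs_def] d'_def by simp
  have d_cont: "continuous_on {0..r} d"
    unfolding d_def by (intro continuous_intros is_solution_continuous_on[OF v r] is_solution_continuous_on[OF w r])
  have d_mono: "d t \<le> d s" if ts: "0 \<le> t" "t \<le> s" "s \<le> r" for s t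
  proof (rule DERIV_nonneg_imp_increasing_open[OF ts(2)])
    fix x assume x: "t < x" "x < s"
    then have x': "0 < x" "x < R" using ts r by auto
    have "0 \<le> d' x" unfolding d'_def
      by (rule slope_diff_nonneg[OF f1 f2 v w]) (use x x' ts lip in auto)
    then show "\<exists>y. (d has_real_derivative y) (at x) \<and> 0 \<le> y" using d_deriv[OF x'] by blast
  next
    show "continuous_on {t..s} d" using d_cont ts by (auto intro: continuous_on_subset)
  qed
  have "d r \<le> d 0 * exp (K * pslope_integral r - K * pslope_integral 0)"
  proof (rule gronwall_exp[where M="\<lambda>t. K * pslope_integral t" and m="\<lambda>t. K * pslope t" and d'=d', OF r(1) d_cont])
    show "continuous_on {0..r} (\<lambda>t. K * pslope_integral t)"
      by (intro continuous_on_mult continuous_on_const continuous_on_pslope_integral r)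
    fix x assume x: "0 < x" "x < r"
    then have x': "0 < x" "x < R" using r by auto
    have "f1 (v t) - f2 (w t) \<le> K * d x" if "t \<in> {0..x}" for t
    proof -
      have "f1 (v t) - f2 (w t) \<le> K * d t" using lip[of t] that x unfolding d_def by auto
      also have "\<dots> \<le> K * d x" using d_mono[of t x] that x K by (intro mult_left_mono) auto
      finally show ?thesis .
    qed
    then have "d' x \<le> K * d x * pslope x" unfolding d'_def using x' by (intro slope_diff_le[OF f1 f2 v w]) auto
    then show "(d has_real_derivative d' x) (at x) \<and>
        ((\<lambda>t. K * pslope_integral t) has_real_derivative K * pslope x) (at x) \<and> d' x \<le> K * pslope x * d x"
      using d_deriv[OF x'] DERIV_cmult[OF pslope_integral_has_derivative[OF x']] by (simp add: mult_ac)
  qed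
  then show ?thesis using is_solution_0[OF v] is_solution_0[OF w] by (simp add: d_def pslope_integral_def)
qed

definition p_moment :: real where
  "p_moment = integral {0..max 1 R} (\<lambda>t. t * p t)"

lemma integrable_p_moment: "(\<lambda>t. t * p t) integrable_on {0..max 1 R}"
proof (rule Henstock_Kurzweil_Integration.integrable_combine[of 0 1 "max 1 R"])
  have "continuous_on {1..max 1 R} p" using p_cont by (rule continuous_on_subset) auto
  then show "(\<lambda>t. t * p t) integrable_on {1..max 1 R}"
    by (intro integrable_continuous_interval continuous_intros)
qed (use tp_integrable in auto)

lemma tp_nonneg: "0 \<le> t \<Longrightarrow> 0 \<le> t * p t"
  using p_positive[of t] by (cases "t = 0") auto

lemma p_moment_nonneg: "0 \<le> p_moment"
  unfolding p_moment_def by (rule integral_nonneg[OF integrable_p_moment]) (simp add: tp_nonneg)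

lemma pslope_le:
  assumes s: "0 \<le> s" "s < R"
  shows "pslope s \<le> exp (\<mu> * R) * integral {0..s} (\<lambda>t. p (R - t))"
proof (cases "s = 0")
  case False
  then have sp: "0 < s" using s by auto
  have "integral {0..s} (\<lambda>t. rho t * p (R - t)) \<le> integral {0..s} (\<lambda>t. (exp (\<mu> * R) * rho s) * p (R - t))"
  proof (rule integral_le)
    show "(\<lambda>t. rho t * p (R - t)) integrable_on {0..s}" "(\<lambda>t. (exp (\<mu> * R) * rho s) * p (R - t)) integrable_on {0..s}"
      using s by (auto intro!: integrable_continuous_interval continuous_intros continuous_on_rho continuous_on_p_reflect)
    show "rho t * p (R - t) \<le> (exp (\<mu> * R) * rho s) * p (R - t)" if t: "t \<in> {0..s}" for t
    proof (rule mult_right_mono)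
      have "rho t \<le> exp (\<mu> * s) * rho s" using rho_le[of t s] t by auto
      also have "\<dots> \<le> exp (\<mu> * R) * rho s" using s mu_positive rho_nonneg[of s] by (intro mult_right_mono) auto
      finally show "rho t \<le> exp (\<mu> * R) * rho s" .
      show "0 \<le> p (R - t)" using p_reflect_bounds[OF s(2) t] by simp
    qed
  qed
  then show ?thesis unfolding pslope_def using rho_pos[OF sp] by (simp add: divide_le_eq mult_ac)
qed (simp add: pslope_def)

lemma pslope_integral_le:
  assumes r: "0 \<le> r" "r < R"
  shows "pslope_integral r \<le> exp (\<mu> * R) * p_moment"
proof -
  have pc: "continuous_on {0..r} (\<lambda>t. p (R - t))" using continuous_on_p_reflect[OF r(2)] .
  have tp: "continuous_on {R - r..R} (\<lambda>t. t * p t)"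
    by (intro continuous_intros continuous_on_subset[OF p_cont]) (use r in auto)
  have "pslope_integral r \<le> integral {0..r} (\<lambda>s. exp (\<mu> * R) * integral {0..s} (\<lambda>t. p (R - t)))"
    unfolding pslope_integral_def
  proof (rule integral_le)
    show "pslope integrable_on {0..r}" using continuous_on_pslope[OF r] by (rule integrable_continuous_interval)
    show "(\<lambda>s. exp (\<mu> * R) * integral {0..s} (\<lambda>t. p (R - t))) integrable_on {0..r}"
      by (intro integrable_continuous_interval continuous_on_mult continuous_on_const
          indefinite_integral_continuous_1 integrable_continuous_interval[OF pc])
    show "pslope s \<le> exp (\<mu> * R) * integral {0..s} (\<lambda>t. p (R - t))" if "s \<in> {0..r}" for s
      using pslope_le that r by simp
  qed
  also have "\<dots> = exp (\<mu> * R) * integral {0..r} (\<lambda>t. (r - t) * p (R - t))"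
    using integral_integral_Icc[OF pc r(1)] by simp
  also have "\<dots> \<le> exp (\<mu> * R) * integral {0..r} (\<lambda>t. (R - t) * p (R - t))"
  proof (intro mult_left_mono integral_le)
    show "(\<lambda>t. (r - t) * p (R - t)) integrable_on {0..r}" "(\<lambda>t. (R - t) * p (R - t)) integrable_on {0..r}"
      by (intro integrable_continuous_interval continuous_intros pc)+
    show "(r - t) * p (R - t) \<le> (R - t) * p (R - t)" if "t \<in> {0..r}" for t
      using p_reflect_bounds[OF r(2) that] r by (intro mult_right_mono) auto
  qed simp
  also have "integral {0..r} (\<lambda>t. (R - t) * p (R - t)) = integral {R - r..R} (\<lambda>t. t * p t)"
    using integral_reflect_Icc[where f="\<lambda>t. t * p t" and r=r and R=R] by simp
  also have "\<dots> \<le> p_moment" unfolding p_moment_def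
  proof (rule integral_subset_le[OF _ integrable_continuous_interval[OF tp] integrable_p_moment])
    show "{R - r..R} \<subseteq> {0..max 1 R}" using r by auto
    show "\<forall>t\<in>{0..max 1 R}. 0 \<le> t * p t" using tp_nonneg by simp
  qed
  finally show ?thesis by simp
qed

subsection \<open>Truncation of the singular nonlinearity\<close>

definition g_cut :: "real \<Rightarrow> real \<Rightarrow> real" where
  "g_cut \<epsilon> x = g (max x \<epsilon>)"

lemma admissible_g_cut:
  assumes "0 < \<epsilon>"
  shows "admissible (g_cut \<epsilon>) (g \<epsilon>)"
  unfolding admissible_def
proof (intro conjI allI antimonoI)
  show "continuous_on UNIV (g_cut \<epsilon>)" unfolding g_cut_def
    by (intro continuous_at_imp_continuous_on ballI isCont_o2[OF _ isCont_g] continuous_intros)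
       (use assms in auto)
  show "g_cut \<epsilon> y \<le> g_cut \<epsilon> x" if "x \<le> y" for x y
    unfolding g_cut_def using that assms by (intro g_antimono) auto
  fix x
  have "0 < max x \<epsilon>" using assms by simp
  then show "0 \<le> g_cut \<epsilon> x" "g_cut \<epsilon> x \<le> g \<epsilon>"
    unfolding g_cut_def using g_positive[of "max x \<epsilon>"] g_antimono[of \<epsilon> "max x \<epsilon>"] assms by auto
qed

lemma g_lipschitz:
  assumes "0 < l"
  obtains K where "0 \<le> K" "\<And>x y. l \<le> x \<Longrightarrow> x \<le> y \<Longrightarrow> y \<le> B \<Longrightarrow> g x - g y \<le> K * (y - x)"
proof -
  have "continuous_on {l..max l B} g'" using g'_cont by (rule continuous_on_subset) (use assms in auto)
  then have "compact (g' ` {l..max l B})" by (intro compact_continuous_image) auto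
  then obtain K where K: "0 < K" "\<And>z. z \<in> g' ` {l..max l B} \<Longrightarrow> norm z \<le> K"
    using compact_imp_bounded bounded_pos by metis
  have "g x - g y \<le> K * (y - x)" if xy: "l \<le> x" "x \<le> y" "y \<le> B" for x y
  proof (cases "x = y")
    case False
    then obtain z where z: "x < z" "z < y" "g y - g x = (y - x) * g' z"
      using MVT2[of x y g g'] g_has_deriv xy assms by force
    then have "(y - x) * (- g' z) \<le> (y - x) * K" using K(2)[of "g' z"] xy by (intro mult_left_mono) auto
    then show ?thesis using z by (simp add: algebra_simps)
  qed simp
  with K(1) show ?thesis by (intro that[of K]) auto
qed

text \<open>The Lipschitz constant does not depend on the cut-off level; the shooting argument relies
  on this uniformity.\<close>
lemma g_cut_lipschitz:
  assumes lip: "\<And>x y. \<delta> \<le> x \<Longrightarrow> x \<le> y \<Longrightarrow> y \<le> B \<Longrightarrow> g x - g y \<le> K * (y - x)"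
    and K: "0 \<le> K" and \<epsilon>: "0 < \<epsilon>" and xy: "\<delta> \<le> max x \<epsilon>" "x \<le> y" "max y \<epsilon> \<le> B"
  shows "0 \<le> g_cut \<epsilon> x - g_cut \<epsilon> y \<and> g_cut \<epsilon> x - g_cut \<epsilon> y \<le> K * (y - x)"
proof
  show "0 \<le> g_cut \<epsilon> x - g_cut \<epsilon> y"
    unfolding g_cut_def using g_antimono[of "max x \<epsilon>" "max y \<epsilon>"] \<epsilon> xy by auto
  have "g_cut \<epsilon> x - g_cut \<epsilon> y \<le> K * (max y \<epsilon> - max x \<epsilon>)"
    unfolding g_cut_def by (rule lip) (use xy in auto)
  also have "\<dots> \<le> K * (y - x)" using K xy by (intro mult_left_mono) auto
  finally show "g_cut \<epsilon> x - g_cut \<epsilon> y \<le> K * (y - x)" .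
qed

definition cut_sol :: "real \<Rightarrow> real \<Rightarrow> real \<Rightarrow> real" where
  "cut_sol \<epsilon> a = (SOME v. is_solution (g_cut \<epsilon>) a v)"

lemma is_solution_cut_sol: "0 < \<epsilon> \<Longrightarrow> is_solution (g_cut \<epsilon>) a (cut_sol \<epsilon> a)"
  unfolding cut_sol_def using solution_exists[OF admissible_g_cut] by (rule someI_ex)

lemma cut_sol_0: "0 < \<epsilon> \<Longrightarrow> cut_sol \<epsilon> a 0 = a"
  using is_solution_0[OF is_solution_cut_sol] .

lemma cut_sol_le: "0 < \<epsilon> \<Longrightarrow> 0 \<le> r \<Longrightarrow> r < R \<Longrightarrow> cut_sol \<epsilon> a r \<le> a"
  using solution_le_initial[OF admissible_g_cut is_solution_cut_sol] .

lemma cut_sol_gap_ge: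
  assumes \<epsilon>: "0 < \<epsilon>'" "\<epsilon>' \<le> \<epsilon>" and ab: "a < b" and r: "0 \<le> r" "r < R"
  shows "b - a \<le> cut_sol \<epsilon> b r - cut_sol \<epsilon>' a r"
proof -
  have \<epsilon>0: "0 < \<epsilon>" using \<epsilon> by simp
  show ?thesis
  proof (rule solution_gap_ge[OF admissible_g_cut[OF \<epsilon>(1)] admissible_g_cut[OF \<epsilon>0]
        is_solution_cut_sol[OF \<epsilon>(1)] is_solution_cut_sol[OF \<epsilon>0] ab _ r])
    show "g_cut \<epsilon> y \<le> g_cut \<epsilon>' x" if "x \<le> y" for x y
      unfolding g_cut_def using that \<epsilon> by (intro g_antimono) auto
  qed
qed

lemma cut_sol_gap_le:
  assumes \<epsilon>: "0 < \<epsilon>" and ab: "a < b" and r: "0 \<le> r" "r < R" and K: "0 \<le> K"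
    and lip: "\<And>x y. \<delta> \<le> x \<Longrightarrow> x \<le> y \<Longrightarrow> y \<le> max b \<epsilon> \<Longrightarrow> g x - g y \<le> K * (y - x)"
    and above: "\<And>t. t \<in> {0..r} \<Longrightarrow> \<delta> \<le> max (cut_sol \<epsilon> a t) \<epsilon>"
  shows "cut_sol \<epsilon> b r - cut_sol \<epsilon> a r \<le> (b - a) * exp (K * exp (\<mu> * R) * p_moment)"
proof -
  have vw: "cut_sol \<epsilon> a t \<le> cut_sol \<epsilon> b t" if "t \<in> {0..r}" for t
    using cut_sol_gap_ge[OF \<epsilon> order_refl ab, of t] ab that r by auto
  have "cut_sol \<epsilon> b r - cut_sol \<epsilon> a r \<le> (b - a) * exp (K * pslope_integral r)"
  proof (rule solution_gap_le[OF admissible_g_cut[OF \<epsilon>] admissible_g_cut[OF \<epsilon>]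
        is_solution_cut_sol[OF \<epsilon>] is_solution_cut_sol[OF \<epsilon>] r K vw])
    fix t assume t: "t \<in> {0..r}"
    have "cut_sol \<epsilon> b t \<le> b" using cut_sol_le[OF \<epsilon>] t r by auto
    then have "max (cut_sol \<epsilon> b t) \<epsilon> \<le> max b \<epsilon>" by simp
    then show "0 \<le> g_cut \<epsilon> (cut_sol \<epsilon> a t) - g_cut \<epsilon> (cut_sol \<epsilon> b t) \<and>
        g_cut \<epsilon> (cut_sol \<epsilon> a t) - g_cut \<epsilon> (cut_sol \<epsilon> b t) \<le> K * (cut_sol \<epsilon> b t - cut_sol \<epsilon> a t)"
      using g_cut_lipschitz[OF lip K \<epsilon> above[OF t] vw[OF t]] by blast
  qed
  also have "\<dots> \<le> (b - a) * exp (K * exp (\<mu> * R) * p_moment)"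
    using pslope_integral_le[OF r] K ab by (simp add: mult_left_mono mult.assoc)
  finally show ?thesis .
qed

lemma cut_sol_eps_mono:
  assumes \<epsilon>: "0 < \<epsilon>'" "\<epsilon>' \<le> \<epsilon>" and r: "0 \<le> r" "r < R"
  shows "cut_sol \<epsilon>' a r \<le> cut_sol \<epsilon> a r"
proof -
  have \<epsilon>0: "0 < \<epsilon>" using \<epsilon> by simp
  obtain K where K: "0 \<le> K" "\<And>x y. \<epsilon> \<le> x \<Longrightarrow> x \<le> y \<Longrightarrow> y \<le> max (a + 1) \<epsilon> \<Longrightarrow> g x - g y \<le> K * (y - x)"
    using g_lipschitz[OF \<epsilon>0] by blast
  define E where "E = exp (K * exp (\<mu> * R) * p_moment)"
  have E: "1 \<le> E" unfolding E_def using K(1) p_moment_nonneg by simp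
  show ?thesis
  proof (rule field_le_linear_epsilon[of "E - 1"])
    fix b assume b: "a < b" "b \<le> a + 1"
    have lip: "g x - g y \<le> K * (y - x)" if "\<epsilon> \<le> x" "x \<le> y" "y \<le> max b \<epsilon>" for x y
      by (rule K(2)[OF that(1,2)]) (use that(3) b in \<open>auto simp: le_max_iff_disj\<close>)
    have "cut_sol \<epsilon> b r - cut_sol \<epsilon> a r \<le> (b - a) * E"
      unfolding E_def by (rule cut_sol_gap_le[OF \<epsilon>0 b(1) r K(1) lip max.cobounded2])
    then show "cut_sol \<epsilon>' a r \<le> cut_sol \<epsilon> a r + (b - a) * (E - 1)"
      using cut_sol_gap_ge[OF \<epsilon> b(1) r] by (simp add: algebra_simps)
  qed (use E in simp)
qed

text \<open>Above \<open>\<epsilon>\<close> both cut-offs are inactive, so this is uniqueness for a Lipschitz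
  nonlinearity: Gronwall with equal initial values.\<close>
lemma cut_sol_eq_if_above:
  assumes \<epsilon>: "0 < \<epsilon>'" "\<epsilon>' \<le> \<epsilon>" and r: "0 \<le> r" "r < R"
    and above: "\<And>t. t \<in> {0..r} \<Longrightarrow> \<epsilon> \<le> cut_sol \<epsilon> a t"
  shows "cut_sol \<epsilon>' a r = cut_sol \<epsilon> a r"
proof -
  obtain K where K: "0 \<le> K" "\<And>x y. \<epsilon>' \<le> x \<Longrightarrow> x \<le> y \<Longrightarrow> y \<le> max a \<epsilon>' \<Longrightarrow> g x - g y \<le> K * (y - x)"
    using g_lipschitz[OF \<epsilon>(1)] by blast
  have \<epsilon>0: "0 < \<epsilon>" using \<epsilon> by simp
  have vw: "cut_sol \<epsilon>' a t \<le> cut_sol \<epsilon> a t" if "t \<in> {0..r}" for t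
    using cut_sol_eps_mono[OF \<epsilon>, of t] that r by auto
  have "cut_sol \<epsilon> a r - cut_sol \<epsilon>' a r \<le> (a - a) * exp (K * pslope_integral r)"
  proof (rule solution_gap_le[OF admissible_g_cut[OF \<epsilon>(1)] admissible_g_cut[OF \<epsilon>0]
        is_solution_cut_sol[OF \<epsilon>(1)] is_solution_cut_sol[OF \<epsilon>0] r K(1) vw])
    fix t assume t: "t \<in> {0..r}"
    have "g_cut \<epsilon> (cut_sol \<epsilon> a t) = g_cut \<epsilon>' (cut_sol \<epsilon> a t)"
      unfolding g_cut_def using above[OF t] \<epsilon> by simp
    moreover have "max (cut_sol \<epsilon> a t) \<epsilon>' \<le> max a \<epsilon>'" using cut_sol_le[OF \<epsilon>0, of t a] t r by simp
    then have "0 \<le> g_cut \<epsilon>' (cut_sol \<epsilon>' a t) - g_cut \<epsilon>' (cut_sol \<epsilon> a t) \<and>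
        g_cut \<epsilon>' (cut_sol \<epsilon>' a t) - g_cut \<epsilon>' (cut_sol \<epsilon> a t) \<le> K * (cut_sol \<epsilon> a t - cut_sol \<epsilon>' a t)"
      using g_cut_lipschitz[OF K(2) K(1) \<epsilon>(1) max.cobounded2 vw[OF t]] by blast
    ultimately show "0 \<le> g_cut \<epsilon>' (cut_sol \<epsilon>' a t) - g_cut \<epsilon> (cut_sol \<epsilon> a t) \<and>
        g_cut \<epsilon>' (cut_sol \<epsilon>' a t) - g_cut \<epsilon> (cut_sol \<epsilon> a t) \<le> K * (cut_sol \<epsilon> a t - cut_sol \<epsilon>' a t)"
      by simp
  qed
  then show ?thesis using vw[of r] r by simp
qed

lemma cut_sol_eq_if_above_max:
  assumes \<epsilon>: "0 < \<epsilon>1" "0 < \<epsilon>2" and r: "0 \<le> r" "r < R"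
    and above: "\<And>t. t \<in> {0..r} \<Longrightarrow> max \<epsilon>1 \<epsilon>2 \<le> cut_sol \<epsilon>1 a t"
  shows "cut_sol \<epsilon>2 a r = cut_sol \<epsilon>1 a r"
proof -
  define \<epsilon> where "\<epsilon> = min \<epsilon>1 \<epsilon>2"
  have \<epsilon>': "0 < \<epsilon>" "\<epsilon> \<le> \<epsilon>1" "\<epsilon> \<le> \<epsilon>2" using \<epsilon> by (auto simp: \<epsilon>_def)
  have eq1: "cut_sol \<epsilon> a t = cut_sol \<epsilon>1 a t" if "t \<in> {0..r}" for t
    using above that r by (intro cut_sol_eq_if_above[OF \<epsilon>'(1,2)]) auto
  have "\<epsilon>2 \<le> cut_sol \<epsilon>2 a t" if "t \<in> {0..r}" for t
    using above[OF that] eq1[OF that] cut_sol_eps_mono[OF \<epsilon>'(1,3), of t a] that r by auto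
  then have "cut_sol \<epsilon> a r = cut_sol \<epsilon>2 a r"
    using r by (intro cut_sol_eq_if_above[OF \<epsilon>'(1,3)]) auto
  then show ?thesis using eq1[of r] r by simp
qed

subsection \<open>Shooting\<close>

text \<open>The solution starting at \<open>a\<close> survives up to \<open>r\<close> if for some cut-off \<open>\<epsilon>\<close> the truncated
  solution stays above \<open>\<epsilon>\<close> on \<open>[0, r]\<close>; there the cut-off is inactive, so it solves the original
  equation and is positive.\<close>
definition survives_upto :: "real \<Rightarrow> real \<Rightarrow> bool" where
  "survives_upto a r \<longleftrightarrow> (\<exists>\<epsilon>>0. \<forall>t\<in>{0..r}. \<epsilon> \<le> cut_sol \<epsilon> a t)"

definition survives :: "real \<Rightarrow> bool" where
  "survives a \<longleftrightarrow> (\<forall>r\<in>{0..<R}. survives_upto a r)"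

lemma slope_le:
  assumes f: "admissible f C" and v: "is_solution f a v" and x: "0 \<le> x" "x < R"
  shows "slope f v x \<le> C * pslope x + x * exp (\<mu> * x)"
proof (cases "x = 0")
  case False
  then have xp: "0 < x" using x by simp
  have "flux f v x \<le> integral {0..x} (\<lambda>t. C * (rho t * p (R - t)) + rho t)" unfolding flux_def
  proof (rule integral_le[OF solution_integrable_rho_rhs[OF f v x]])
    show "(\<lambda>t. C * (rho t * p (R - t)) + rho t) integrable_on {0..x}"
      by (intro integrable_continuous_interval continuous_intros continuous_on_rho continuous_on_p_reflect x)
    show "rho t * rhs f v t \<le> C * (rho t * p (R - t)) + rho t" if t: "t \<in> {0..x}" for t
    proof -
      have "rho t * p (R - t) * f (v t) \<le> rho t * p (R - t) * C"
        using f rho_nonneg[of t] p_reflect_bounds[OF x(2) t] t unfolding admissible_def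
        by (intro mult_left_mono) auto
      then show ?thesis unfolding rhs_def by (simp add: algebra_simps)
    qed
  qed
  also have "\<dots> = C * integral {0..x} (\<lambda>t. rho t * p (R - t)) + integral {0..x} rho"
    by (subst Henstock_Kurzweil_Integration.integral_add)
       (auto intro!: integrable_continuous_interval continuous_intros continuous_on_rho continuous_on_p_reflect x)
  also have "\<dots> \<le> C * integral {0..x} (\<lambda>t. rho t * p (R - t)) + x * exp (\<mu> * x) * rho x"
    using integral_rho_le[OF x(1)] by simp
  finally show ?thesis
    unfolding slope_def pslope_def using rho_pos[OF xp] by (simp add: divide_le_eq algebra_simps)
qed (simp add: slope_def pslope_def)

lemma small_not_survives: "\<not> survives (R^2 / (16 * N))"
proof
  assume "survives (R^2 / (16 * N))"
  then have "survives_upto (R^2 / (16 * N)) (R / 2)" unfolding survives_def using R_positive by simp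
  then obtain \<epsilon> where "0 < \<epsilon>" "\<forall>t\<in>{0..R/2}. \<epsilon> \<le> cut_sol \<epsilon> (R^2 / (16 * N)) t"
    unfolding survives_upto_def by blast
  then have \<epsilon>: "0 < \<epsilon>" "\<epsilon> \<le> cut_sol \<epsilon> (R^2 / (16 * N)) (R / 2)" using R_positive by auto
  have "cut_sol \<epsilon> (R^2 / (16 * N)) (R / 2) \<le> cut_sol \<epsilon> (R^2 / (16 * N)) 0 - ((R/2)^2 - 0^2) / (2 * N)"
    using R_positive by (intro solution_drop[OF admissible_g_cut[OF \<epsilon>(1)] is_solution_cut_sol[OF \<epsilon>(1)]]) auto
  also have "\<dots> = R^2 / (16 * N) - R^2 / (8 * N)" using cut_sol_0[OF \<epsilon>(1)] by (simp add: power_divide)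
  also have "\<dots> < 0" using R_positive N_ge_2 by (simp add: field_simps)
  finally show False using \<epsilon> by simp
qed

lemma large_survives:
  assumes a: "2 \<le> a" "2 * (g 1 * (exp (\<mu> * R) * p_moment) + R^2 * exp (\<mu> * R)) < a"
  shows "survives a"
  unfolding survives_def survives_upto_def
proof (intro ballI exI[of _ "a / 2"] conjI)
  show \<epsilon>: "0 < a / 2" using a by simp
  fix r t assume "r \<in> {0..<R}" "t \<in> {0..r}"
  then have t: "0 \<le> t" "t < R" by auto
  let ?v = "cut_sol (a / 2) a"
  note f = admissible_g_cut[OF \<epsilon>] and v = is_solution_cut_sol[OF \<epsilon>, of a]
  have "integral {0..t} (slope (g_cut (a/2)) ?v) \<le> integral {0..t} (\<lambda>s. g 1 * pslope s + R * exp (\<mu> * R))"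
  proof (rule integral_le)
    show "slope (g_cut (a/2)) ?v integrable_on {0..t}"
      using solution_continuous_on_slope[OF f v t] integrable_continuous_interval by blast
    show "(\<lambda>s. g 1 * pslope s + R * exp (\<mu> * R)) integrable_on {0..t}"
      by (intro integrable_continuous_interval continuous_on_add continuous_on_mult_left continuous_on_const
          continuous_on_pslope t)
    show "slope (g_cut (a/2)) ?v s \<le> g 1 * pslope s + R * exp (\<mu> * R)" if s: "s \<in> {0..t}" for s
    proof -
      have "slope (g_cut (a/2)) ?v s \<le> g (a/2) * pslope s + s * exp (\<mu> * s)"
        using slope_le[OF f v] s t by auto
      also have "g (a/2) * pslope s \<le> g 1 * pslope s"
        using g_antimono[of 1 "a/2"] a pslope_nonneg[of s] s t by (intro mult_right_mono) auto
      also have "s * exp (\<mu> * s) \<le> R * exp (\<mu> * R)"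
        using s t mu_positive by (intro mult_mono) auto
      finally show ?thesis by simp
    qed
  qed
  also have "\<dots> = g 1 * pslope_integral t + t * (R * exp (\<mu> * R))"
    unfolding pslope_integral_def using continuous_on_pslope[OF t] t
    by (subst Henstock_Kurzweil_Integration.integral_add)
       (auto intro!: integrable_continuous_interval continuous_on_mult_left)
  also have "\<dots> \<le> g 1 * (exp (\<mu> * R) * p_moment) + R * (R * exp (\<mu> * R))"
    using pslope_integral_le[OF t] g_positive[of 1] t
    by (intro add_mono mult_left_mono mult_right_mono) auto
  finally show "a / 2 \<le> ?v t" using is_solution_eq[OF v t] a by (simp add: power2_eq_square)
qed

lemma survives_mono:
  assumes "survives a" "a < b"
  shows "survives b"
  unfolding survives_def survives_upto_def
proof
  fix r assume r: "r \<in> {0..<R}"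
  then obtain \<epsilon> where \<epsilon>: "0 < \<epsilon>" "\<And>t. t \<in> {0..r} \<Longrightarrow> \<epsilon> \<le> cut_sol \<epsilon> a t"
    using assms(1) unfolding survives_def survives_upto_def by blast
  have "\<epsilon> \<le> cut_sol \<epsilon> b t" if "t \<in> {0..r}" for t
    using cut_sol_gap_ge[OF \<epsilon>(1) order_refl assms(2), of t] \<epsilon>(2)[OF that] that r assms(2) by auto
  with \<epsilon>(1) show "\<exists>\<epsilon>>0. \<forall>t\<in>{0..r}. \<epsilon> \<le> cut_sol \<epsilon> b t" by blast
qed

text \<open>For \<open>\<epsilon> = \<kappa> / 2\<close>, the first point where the truncated solution reaches \<open>\<epsilon>\<close> is such
  a dip.\<close>
lemma exists_dip:
  assumes \<kappa>: "0 < \<kappa>" "\<kappa> \<le> a" and r1: "0 \<le> r1" "r1 < R" and dies: "\<not> survives_upto a r1"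
  obtains r \<epsilon> where "r \<in> {0..r1}" "0 < \<epsilon>" "\<And>t. t \<in> {0..r} \<Longrightarrow> \<epsilon> \<le> cut_sol \<epsilon> a t" "cut_sol \<epsilon> a r < \<kappa>"
proof -
  define \<epsilon> where "\<epsilon> = \<kappa> / 2"
  have \<epsilon>: "0 < \<epsilon>" "\<epsilon> < \<kappa>" using \<kappa> by (auto simp: \<epsilon>_def)
  have "\<not> (\<forall>t\<in>{0..r1}. \<epsilon> \<le> cut_sol \<epsilon> a t)"
    using dies \<epsilon>(1) unfolding survives_upto_def by blast
  then obtain t where t: "t \<in> {0..r1}" "cut_sol \<epsilon> a t \<le> \<epsilon>" by (auto simp: not_le)
  have "\<epsilon> < cut_sol \<epsilon> a 0" using cut_sol_0[OF \<epsilon>(1)] \<epsilon> \<kappa> by simp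
  then obtain t1 where t1: "t1 \<in> {0..r1}" "cut_sol \<epsilon> a t1 = \<epsilon>" "\<And>s. s \<in> {0..<t1} \<Longrightarrow> \<epsilon> < cut_sol \<epsilon> a s"
    using continuous_first_crossing[OF is_solution_continuous_on[OF is_solution_cut_sol[OF \<epsilon>(1)] r1] _ t]
    by blast
  have "\<epsilon> \<le> cut_sol \<epsilon> a s" if "s \<in> {0..t1}" for s
    using t1(2) t1(3)[of s] that by (cases "s = t1") auto
  with that[OF t1(1) \<epsilon>(1)] show ?thesis using t1(2) \<epsilon>(2) by simp
qed

text \<open>A dip of the solution below the drop \<open>(r2\<^sup>2 - r\<^sup>2) / (2N)\<close> persists for slightly larger
  initial values, by the Gronwall estimate; those solutions then die before \<open>r2\<close>.\<close>
lemma not_survives_above_dip: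
  assumes \<epsilon>: "0 < \<epsilon>" and r: "0 \<le> r" "r < r2" "r2 < R"
    and above: "\<And>t. t \<in> {0..r} \<Longrightarrow> \<epsilon> \<le> cut_sol \<epsilon> a t"
    and dip: "cut_sol \<epsilon> a r < (r2^2 - r^2) / (2 * N)"
  obtains \<eta> where "0 < \<eta>" "\<not> survives (a + \<eta>)"
proof -
  obtain K where K: "0 \<le> K" "\<And>x y. \<epsilon> \<le> x \<Longrightarrow> x \<le> y \<Longrightarrow> y \<le> max (a + 1) \<epsilon> \<Longrightarrow> g x - g y \<le> K * (y - x)"
    using g_lipschitz[OF \<epsilon>] by blast
  define E where "E = exp (K * exp (\<mu> * R) * p_moment)"
  define c where "c = (r2^2 - r^2) / (2 * N)"
  define \<eta> where "\<eta> = min 1 ((c - cut_sol \<epsilon> a r) / (2 * E))"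
  have E: "0 < E" by (simp add: E_def)
  have \<eta>: "0 < \<eta>" "\<eta> \<le> 1" using dip E by (auto simp: \<eta>_def c_def)
  have "\<eta> * E \<le> (c - cut_sol \<epsilon> a r) / (2 * E) * E"
    using E by (intro mult_right_mono) (auto simp: \<eta>_def)
  then have \<eta>E: "\<eta> * E \<le> (c - cut_sol \<epsilon> a r) / 2" using E by simp
  show ?thesis
  proof (rule that[OF \<eta>(1)], rule notI)
    define b where "b = a + \<eta>"
    assume "survives (a + \<eta>)"
    then have "survives_upto b r2" using r unfolding survives_def b_def by simp
    then obtain \<epsilon>b where \<epsilon>b: "0 < \<epsilon>b" "\<And>t. t \<in> {0..r2} \<Longrightarrow> \<epsilon>b \<le> cut_sol \<epsilon>b b t"
      unfolding survives_upto_def by blast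
    define \<epsilon>' where "\<epsilon>' = min \<epsilon> \<epsilon>b"
    have \<epsilon>': "0 < \<epsilon>'" "\<epsilon>' \<le> \<epsilon>" "\<epsilon>' \<le> \<epsilon>b" using \<epsilon> \<epsilon>b by (auto simp: \<epsilon>'_def)
    have a_eq: "cut_sol \<epsilon>' a t = cut_sol \<epsilon> a t" if "t \<in> {0..r}" for t
      using above that r by (intro cut_sol_eq_if_above[OF \<epsilon>'(1,2)]) auto
    have "cut_sol \<epsilon>' b r - cut_sol \<epsilon>' a r \<le> (b - a) * E"
      unfolding E_def
    proof (rule cut_sol_gap_le[OF \<epsilon>'(1) _ r(1) _ K(1)])
      show "a < b" "r < R" using \<eta> r by (auto simp: b_def)
      show "g x - g y \<le> K * (y - x)" if "\<epsilon> \<le> x" "x \<le> y" "y \<le> max b \<epsilon>'" for x y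
        by (rule K(2)[OF that(1,2)]) (use that(3) \<eta> \<epsilon>' in \<open>auto simp: b_def le_max_iff_disj\<close>)
      show "\<epsilon> \<le> max (cut_sol \<epsilon>' a t) \<epsilon>'" if "t \<in> {0..r}" for t
        using a_eq[OF that] above[OF that] by simp
    qed
    then have "cut_sol \<epsilon>' b r < c" using \<eta>E dip a_eq[of r] r by (simp add: b_def c_def)
    moreover have "cut_sol \<epsilon>' b r2 \<le> cut_sol \<epsilon>' b r - c"
      unfolding c_def using r by (intro solution_drop[OF admissible_g_cut[OF \<epsilon>'(1)] is_solution_cut_sol[OF \<epsilon>'(1)]]) auto
    moreover have "cut_sol \<epsilon>' b r2 = cut_sol \<epsilon>b b r2"
      using \<epsilon>b r by (intro cut_sol_eq_if_above[OF \<epsilon>'(1,3)]) auto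
    ultimately show False using \<epsilon>b(1) \<epsilon>b(2)[of r2] r by auto
  qed
qed

lemma not_survives_open:
  assumes a: "0 < a" and dies: "\<not> survives a"
  obtains \<eta> where "0 < \<eta>" "\<not> survives (a + \<eta>)"
proof -
  obtain r1 where r1: "0 \<le> r1" "r1 < R" "\<not> survives_upto a r1" using dies unfolding survives_def by auto
  define r2 where "r2 = (r1 + R) / 2"
  have r2: "r1 < r2" "r2 < R" using r1 by (auto simp: r2_def)
  define c where "c = (r2^2 - r1^2) / (2 * N)"
  have c: "0 < c" unfolding c_def using r1 r2 N_ge_2 by (auto intro!: divide_pos_pos power_strict_mono)
  obtain r \<epsilon> where r: "r \<in> {0..r1}" "0 < \<epsilon>" "\<And>t. t \<in> {0..r} \<Longrightarrow> \<epsilon> \<le> cut_sol \<epsilon> a t" "cut_sol \<epsilon> a r < min a c"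
    using exists_dip[of "min a c" a r1] a c r1 by auto
  have "c \<le> (r2^2 - r^2) / (2 * N)"
    unfolding c_def using r by (intro divide_right_mono diff_left_mono power_mono) auto
  then have "cut_sol \<epsilon> a r < (r2^2 - r^2) / (2 * N)" using r(4) by simp
  moreover have "0 \<le> r" "r < r2" using r(1) r2 by auto
  ultimately obtain \<eta> where "0 < \<eta>" "\<not> survives (a + \<eta>)"
    using not_survives_above_dip[OF r(2) _ _ r2(2) r(3)] by blast
  then show ?thesis by (rule that)
qed

lemma survives_below:
  assumes \<epsilon>: "0 < \<epsilon>" and b: "0 < b" and above: "\<And>t. t \<in> {0..<R} \<Longrightarrow> 2 * \<epsilon> \<le> cut_sol \<epsilon> b t"
  obtains a where "0 < a" "a < b" "survives a"
proof -
  obtain K where K: "0 \<le> K" "\<And>x y. \<epsilon> \<le> x \<Longrightarrow> x \<le> y \<Longrightarrow> y \<le> max b \<epsilon> \<Longrightarrow> g x - g y \<le> K * (y - x)"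
    using g_lipschitz[OF \<epsilon>] by blast
  define E where "E = exp (K * exp (\<mu> * R) * p_moment)"
  have E: "0 < E" by (simp add: E_def)
  define \<eta> where "\<eta> = min (b / 2) (\<epsilon> / E)"
  have \<eta>: "0 < \<eta>" "\<eta> < b" using \<epsilon> b E by (auto simp: \<eta>_def)
  have "\<eta> * E \<le> \<epsilon> / E * E" using E by (intro mult_right_mono) (auto simp: \<eta>_def)
  then have \<eta>E: "\<eta> * E \<le> \<epsilon>" using E by simp
  have "survives (b - \<eta>)" unfolding survives_def survives_upto_def
  proof (intro ballI exI[of _ \<epsilon>] conjI \<epsilon>)
    fix r t assume "r \<in> {0..<R}" "t \<in> {0..r}"
    then have t: "0 \<le> t" "t < R" by auto
    have "cut_sol \<epsilon> b t - cut_sol \<epsilon> (b - \<eta>) t \<le> (b - (b - \<eta>)) * E"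
      unfolding E_def using \<eta> by (intro cut_sol_gap_le[OF \<epsilon> _ t K(1) K(2)]) auto
    then show "\<epsilon> \<le> cut_sol \<epsilon> (b - \<eta>) t" using above[of t] \<eta>E t by simp
  qed
  moreover have "0 < b - \<eta>" "b - \<eta> < b" using \<eta> by auto
  ultimately show ?thesis using that by blast
qed

lemma survival_threshold:
  "\<exists>a\<^sub>0>0. survives a\<^sub>0 \<and> (\<forall>a. 0 < a \<longrightarrow> a < a\<^sub>0 \<longrightarrow> \<not> survives a)"
proof -
  define A where "A = {a. 0 < a \<and> \<not> survives a}"
  define a\<^sub>1 where "a\<^sub>1 = max 2 (2 * (g 1 * (exp (\<mu> * R) * p_moment) + R^2 * exp (\<mu> * R)) + 1)"
  have small: "R^2 / (16 * N) \<in> A"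
    using small_not_survives R_positive N_ge_2 by (simp add: A_def)
  have A_bound: "a < a\<^sub>1" if "a \<in> A" for a
    using that large_survives[of a] by (force simp: A_def a\<^sub>1_def)
  then have bdd: "bdd_above A" by (meson bdd_aboveI less_imp_le)
  define a\<^sub>0 where "a\<^sub>0 = Sup A"
  have pos: "0 < a\<^sub>0"
    using cSup_upper[OF small bdd] small unfolding a\<^sub>0_def A_def by simp
  have "survives a\<^sub>0"
  proof (rule ccontr)
    assume "\<not> survives a\<^sub>0"
    then obtain \<eta> where "0 < \<eta>" "\<not> survives (a\<^sub>0 + \<eta>)" using not_survives_open[OF pos] by blast
    then have "a\<^sub>0 + \<eta> \<in> A" using pos by (simp add: A_def)
    then show False using cSup_upper[OF _ bdd] \<open>0 < \<eta>\<close> unfolding a\<^sub>0_def by fastforce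
  qed
  moreover have "\<not> survives a" if "0 < a" "a < a\<^sub>0" for a
  proof
    assume "survives a"
    then have "b \<le> a" if "b \<in> A" for b
      using survives_mono[of a b] that by (force simp: A_def)
    then have "a\<^sub>0 \<le> a" unfolding a\<^sub>0_def using small by (intro cSup_least) auto
    then show False using that by simp
  qed
  ultimately show ?thesis using pos by blast
qed

definition glued_solution :: "real \<Rightarrow> (real \<Rightarrow> real) \<Rightarrow> bool" where
  "glued_solution a V \<longleftrightarrow> (\<forall>r\<in>{0..<R}. \<exists>\<epsilon>>0. \<forall>t\<in>{0..r}. V t = cut_sol \<epsilon> a t \<and> \<epsilon> \<le> cut_sol \<epsilon> a t)"

lemma glued_solutionD:
  "glued_solution a V \<Longrightarrow> r \<in> {0..<R} \<Longrightarrow> \<exists>\<epsilon>>0. \<forall>t\<in>{0..r}. V t = cut_sol \<epsilon> a t \<and> \<epsilon> \<le> cut_sol \<epsilon> a t"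
  unfolding glued_solution_def by blast

lemma surviving_profile:
  assumes "survives a"
  obtains V where "V R = 0" "glued_solution a V"
proof -
  define eps where "eps r = (SOME \<epsilon>. 0 < \<epsilon> \<and> (\<forall>t\<in>{0..r}. \<epsilon> \<le> cut_sol \<epsilon> a t))" for r
  have eps: "0 < eps r" "\<And>t. t \<in> {0..r} \<Longrightarrow> eps r \<le> cut_sol (eps r) a t" if "r \<in> {0..<R}" for r
  proof -
    have "\<exists>\<epsilon>. 0 < \<epsilon> \<and> (\<forall>t\<in>{0..r}. \<epsilon> \<le> cut_sol \<epsilon> a t)"
      using assms that unfolding survives_def survives_upto_def by blast
    from someI_ex[OF this] show "0 < eps r" "\<And>t. t \<in> {0..r} \<Longrightarrow> eps r \<le> cut_sol (eps r) a t"
      unfolding eps_def by auto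
  qed
  define V where "V r = (if r < R then cut_sol (eps r) a r else 0)" for r
  have agree: "V t = cut_sol \<epsilon> a t"
    if r: "r \<in> {0..<R}" and \<epsilon>: "0 < \<epsilon>" "\<And>t. t \<in> {0..r} \<Longrightarrow> \<epsilon> \<le> cut_sol \<epsilon> a t" and t: "t \<in> {0..r}"
    for r \<epsilon> t
  proof -
    have t': "t \<in> {0..<R}" using t r by auto
    define \<epsilon>' where "\<epsilon>' = min \<epsilon> (eps t)"
    have \<epsilon>': "0 < \<epsilon>'" "\<epsilon>' \<le> \<epsilon>" "\<epsilon>' \<le> eps t" using \<epsilon> eps(1)[OF t'] by (auto simp: \<epsilon>'_def)
    have "cut_sol \<epsilon>' a t = cut_sol \<epsilon> a t"
      using \<epsilon>(2) t t' by (intro cut_sol_eq_if_above[OF \<epsilon>'(1,2)]) auto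
    moreover have "cut_sol \<epsilon>' a t = cut_sol (eps t) a t"
      using eps(2)[OF t'] t' by (intro cut_sol_eq_if_above[OF \<epsilon>'(1,3)]) auto
    ultimately show ?thesis using t' by (simp add: V_def)
  qed
  have "glued_solution a V" unfolding glued_solution_def
  proof
    fix r assume r: "r \<in> {0..<R}"
    show "\<exists>\<epsilon>>0. \<forall>t\<in>{0..r}. V t = cut_sol \<epsilon> a t \<and> \<epsilon> \<le> cut_sol \<epsilon> a t"
      using agree[OF r] eps[OF r] by blast
  qed
  then show ?thesis by (intro that) (simp_all add: V_def)
qed

text \<open>At the threshold the profile is not bounded away from zero: otherwise, by the Gronwall
  estimate, slightly smaller initial values would survive as well.\<close>
lemma threshold_profile_small:
  assumes a\<^sub>0: "0 < a\<^sub>0" "\<And>a. 0 < a \<Longrightarrow> a < a\<^sub>0 \<Longrightarrow> \<not> survives a"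
    and V: "glued_solution a\<^sub>0 V"
    and \<kappa>: "0 < \<kappa>"
  shows "\<exists>r\<in>{0..<R}. V r < \<kappa>"
proof (rule ccontr)
  assume "\<not> ?thesis"
  then have V\<kappa>: "\<kappa> \<le> V r" if "r \<in> {0..<R}" for r using that by force
  define \<epsilon> where "\<epsilon> = \<kappa> / 2"
  have \<epsilon>: "0 < \<epsilon>" using \<kappa> by (simp add: \<epsilon>_def)
  have "2 * \<epsilon> \<le> cut_sol \<epsilon> a\<^sub>0 r" if r: "r \<in> {0..<R}" for r
  proof -
    obtain \<epsilon>r where \<epsilon>r: "0 < \<epsilon>r" "\<And>t. t \<in> {0..r} \<Longrightarrow> V t = cut_sol \<epsilon>r a\<^sub>0 t \<and> \<epsilon>r \<le> cut_sol \<epsilon>r a\<^sub>0 t"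
      using glued_solutionD[OF V r] by blast
    have "max \<epsilon>r \<epsilon> \<le> cut_sol \<epsilon>r a\<^sub>0 t" if "t \<in> {0..r}" for t
      using \<epsilon>r(2)[OF that] V\<kappa>[of t] that r \<kappa> by (auto simp: \<epsilon>_def)
    then have "cut_sol \<epsilon> a\<^sub>0 r = cut_sol \<epsilon>r a\<^sub>0 r"
      using r by (intro cut_sol_eq_if_above_max[OF \<epsilon>r(1) \<epsilon>]) auto
    then show ?thesis using \<epsilon>r(2)[of r] V\<kappa>[OF r] r by (simp add: \<epsilon>_def)
  qed
  then obtain a where "0 < a" "a < a\<^sub>0" "survives a" using survives_below[OF \<epsilon> a\<^sub>0(1)] by blast
  then show False using a\<^sub>0(2) by blast
qed

lemma threshold_profile_tendsto_0:
  assumes a\<^sub>0: "0 < a\<^sub>0" "\<And>a. 0 < a \<Longrightarrow> a < a\<^sub>0 \<Longrightarrow> \<not> survives a"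
    and V: "glued_solution a\<^sub>0 V"
  shows "(V \<longlongrightarrow> 0) (at_left R)"
proof (rule order_tendstoI)
  fix y :: real assume "y < 0"
  have "y < V x" if x: "x \<in> {0<..<R}" for x
  proof -
    have "x \<in> {0..<R}" using x by simp
    then obtain \<epsilon> where \<epsilon>: "0 < \<epsilon>" "\<forall>t\<in>{0..x}. V t = cut_sol \<epsilon> a\<^sub>0 t \<and> \<epsilon> \<le> cut_sol \<epsilon> a\<^sub>0 t"
      using glued_solutionD[OF V] by blast
    then have "V x = cut_sol \<epsilon> a\<^sub>0 x" "\<epsilon> \<le> cut_sol \<epsilon> a\<^sub>0 x" using x by auto
    then show ?thesis using \<epsilon>(1) \<open>y < 0\<close> by linarith
  qed
  moreover have "\<forall>\<^sub>F x in at_left R. x \<in> {0<..<R}" by (rule eventually_at_left_real[OF R_positive])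
  ultimately show "\<forall>\<^sub>F x in at_left R. y < V x" by (simp add: eventually_mono)
next
  fix y :: real assume "0 < y"
  then obtain r0 where r0: "r0 \<in> {0..<R}" "V r0 < y" using threshold_profile_small[OF a\<^sub>0 V] by blast
  have "V x < y" if x: "x \<in> {r0<..<R}" for x
  proof -
    have "x \<in> {0..<R}" using x r0 by simp
    then obtain \<epsilon> where \<epsilon>: "0 < \<epsilon>" "\<forall>t\<in>{0..x}. V t = cut_sol \<epsilon> a\<^sub>0 t \<and> \<epsilon> \<le> cut_sol \<epsilon> a\<^sub>0 t"
      using glued_solutionD[OF V] by blast
    have "cut_sol \<epsilon> a\<^sub>0 x \<le> cut_sol \<epsilon> a\<^sub>0 r0"
      using x r0 by (intro solution_antimono[OF admissible_g_cut[OF \<epsilon>(1)] is_solution_cut_sol[OF \<epsilon>(1)]]) auto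
    moreover have "V x = cut_sol \<epsilon> a\<^sub>0 x" "V r0 = cut_sol \<epsilon> a\<^sub>0 r0" using \<epsilon>(2) x r0 by auto
    ultimately show ?thesis using r0(2) by linarith
  qed
  moreover have "\<forall>\<^sub>F x in at_left R. x \<in> {r0<..<R}" by (rule eventually_at_left_real) (use r0 in simp)
  ultimately show "\<forall>\<^sub>F x in at_left R. V x < y" by (simp add: eventually_mono)
qed

subsection \<open>Regularity at the origin\<close>

lemma solution_continuous_on_rhs:
  "admissible f C \<Longrightarrow> is_solution f a w \<Longrightarrow> 0 \<le> r \<Longrightarrow> r < R \<Longrightarrow> continuous_on {0..r} (rhs f w)"
  unfolding rhs_def[abs_def]
  by (intro continuous_intros continuous_on_p_reflect solution_continuous_on_comp) auto

lemma slope_has_derivative: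
  assumes f: "admissible f C" and w: "is_solution f a w" and x: "0 < x" "x < R"
  shows "(slope f w has_real_derivative rhs f w x - slope f w x * ((real N - 1) / x - \<mu>)) (at x)"
proof -
  define r where "r = (x + R) / 2"
  have r: "0 \<le> r" "r < R" "x < r" using x by (auto simp: r_def)
  have "(flux f w has_real_derivative rho x * rhs f w x) (at x within {0..r})"
    unfolding flux_def[abs_def] using x r
    by (intro integral_has_real_derivative continuous_intros continuous_on_rho
        solution_continuous_on_rhs[OF f w r(1,2)]) auto
  then have "(flux f w has_real_derivative rho x * rhs f w x) (at x)"
    using at_within_Icc_at[of 0 x r] x r by simp
  from DERIV_divide[OF this rho_has_derivative[OF x(1)]] rho_pos[OF x(1)]
  have "((\<lambda>s. flux f w s / rho s) has_real_derivative
      (rho x * rhs f w x * rho x - flux f w x * (rho x * ((real N - 1) / x - \<mu>))) / (rho x * rho x)) (at x)"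
    by simp
  moreover have "(rho x * rhs f w x * rho x - flux f w x * (rho x * ((real N - 1) / x - \<mu>))) / (rho x * rho x)
      = rhs f w x - slope f w x * ((real N - 1) / x - \<mu>)"
    unfolding slope_def using rho_pos[OF x(1)] by (simp add: field_simps)
  ultimately show ?thesis unfolding slope_def[abs_def] by simp
qed

lemma rho_mean_tendsto: "((\<lambda>x. integral {0..x} rho / (x * rho x)) \<longlongrightarrow> 1 / N) (at_right 0)"
proof (rule tendsto_sandwich[of "\<lambda>_. 1 / N" _ _ "\<lambda>x. exp (\<mu> * x) / N"])
  have "1 / N \<le> integral {0..x} rho / (x * rho x) \<and> integral {0..x} rho / (x * rho x) \<le> exp (\<mu> * x) / N"
    if x: "0 < x" for x
  proof -
    have xr: "0 < x * rho x" using rho_pos[OF x] x by simp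
    have "integral {0..x} rho \<le> integral {0..x} (\<lambda>t. t ^ (N - 1))"
      using rho_le_power by (intro integral_le integrable_rho integrable_continuous_interval continuous_intros) auto
    also have "\<dots> = x ^ N / N" using has_integral_power_Icc0[of x N] x N_ge_2 by (simp add: integral_unique)
    finally have "integral {0..x} rho \<le> exp (\<mu> * x) * (x * rho x) / N"
      using mult_rho[of x] by (simp add: exp_minus field_simps)
    moreover have "(x * rho x) / N \<le> integral {0..x} rho" using integral_rho_ge[of x] mult_rho[of x] x by simp
    moreover have "0 < real N" using N_ge_2 by simp
    ultimately show ?thesis using xr by (simp add: field_simps)
  qed
  moreover have "\<forall>\<^sub>F x in at_right (0::real). 0 < x" by (rule eventually_at_right_less)
  ultimately show "\<forall>\<^sub>F x in at_right 0. 1 / N \<le> integral {0..x} rho / (x * rho x)"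
    "\<forall>\<^sub>F x in at_right 0. integral {0..x} rho / (x * rho x) \<le> exp (\<mu> * x) / N"
    by (auto elim: eventually_mono)
  have "((\<lambda>x. exp (\<mu> * x) / N) \<longlongrightarrow> exp (\<mu> * 0) / N) (at_right 0)"
    using N_ge_2 by (intro tendsto_intros) auto
  then show "((\<lambda>x. exp (\<mu> * x) / N) \<longlongrightarrow> 1 / N) (at_right 0)" by simp
qed simp

lemma rho_weighted_mean_tendsto_0:
  assumes h: "continuous_on {0..r} h" and r: "0 < r"
  shows "((\<lambda>x. integral {0..x} (\<lambda>t. rho t * (h t - h 0)) / (x * rho x)) \<longlongrightarrow> 0) (at_right 0)"
proof (rule tendstoI)
  fix e :: real assume e: "0 < e"
  define e' where "e' = e / (2 * exp (\<mu> * r))"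
  have e': "0 < e'" using e by (simp add: e'_def)
  obtain b where b: "0 < b" "\<And>t. 0 < t \<Longrightarrow> t < b \<Longrightarrow> dist (h t) (h 0) < e'"
    using tendstoD[OF continuous_on_Icc_at_rightD[OF h r] e'] unfolding eventually_at_right_field by auto
  have "dist (integral {0..x} (\<lambda>t. rho t * (h t - h 0)) / (x * rho x)) 0 < e" if x: "0 < x" "x < min b r" for x
  proof -
    have hb: "\<bar>h t - h 0\<bar> \<le> e'" if "t \<in> {0..x}" for t
      using b(2)[of t] that x e' by (cases "t = 0") (auto simp: dist_real_def)
    have "(\<lambda>t. rho t * (h t - h 0)) integrable_on {0..x}"
      using x by (intro integrable_continuous_interval continuous_intros continuous_on_rho
          continuous_on_subset[OF h]) auto
    from rho_average_bound[OF _ this hb, of x] x rho_pos[OF x(1)]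
    have "\<bar>integral {0..x} (\<lambda>t. rho t * (h t - h 0)) / (x * rho x)\<bar> \<le> e' * exp (\<mu> * x)"
      by (simp add: abs_div abs_mult field_simps)
    also have "\<dots> \<le> e' * exp (\<mu> * r)" using e' x mu_positive by (intro mult_left_mono) auto
    also have "\<dots> < e" using e by (simp add: e'_def)
    finally show ?thesis by simp
  qed
  then show "\<forall>\<^sub>F x in at_right 0. dist (integral {0..x} (\<lambda>t. rho t * (h t - h 0)) / (x * rho x)) 0 < e"
    unfolding eventually_at_right_field using b r by (intro exI[of _ "min b r"]) auto
qed

text \<open>Since \<open>\<rho> t \<sim> t\<^bsup>N-1\<^esup>\<close>, the weight \<open>\<rho>\<close> on \<open>[0, x]\<close> has total mass \<open>\<sim> x \<rho> x / N\<close>.\<close>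
lemma rho_weighted_mean_tendsto:
  assumes h: "continuous_on {0..r} h" and r: "0 < r"
  shows "((\<lambda>x. integral {0..x} (\<lambda>t. rho t * h t) / (x * rho x)) \<longlongrightarrow> h 0 / N) (at_right 0)"
proof -
  define E where "E x = integral {0..x} (\<lambda>t. rho t * (h t - h 0)) / (x * rho x)" for x
  have "integral {0..x} (\<lambda>t. rho t * h t) / (x * rho x) = h 0 * (integral {0..x} rho / (x * rho x)) + E x"
    if x: "0 < x" "x < r" for x
  proof -
    have "integral {0..x} (\<lambda>t. rho t * h t) = integral {0..x} (\<lambda>t. h 0 * rho t + rho t * (h t - h 0))"
      by (simp add: algebra_simps)
    also have "\<dots> = h 0 * integral {0..x} rho + integral {0..x} (\<lambda>t. rho t * (h t - h 0))"
      using x by (subst Henstock_Kurzweil_Integration.integral_add)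
        (auto intro!: integrable_continuous_interval continuous_intros continuous_on_rho continuous_on_subset[OF h])
    finally show ?thesis by (simp add: E_def add_divide_distrib)
  qed
  then have "\<forall>\<^sub>F x in at_right 0. h 0 * (integral {0..x} rho / (x * rho x)) + E x
      = integral {0..x} (\<lambda>t. rho t * h t) / (x * rho x)"
    unfolding eventually_at_right_field using r by (intro exI[of _ r]) auto
  moreover have "((\<lambda>x. h 0 * (integral {0..x} rho / (x * rho x)) + E x) \<longlongrightarrow> h 0 * (1 / N) + 0) (at_right 0)"
    unfolding E_def by (intro tendsto_intros rho_mean_tendsto rho_weighted_mean_tendsto_0[OF h r])
  ultimately show ?thesis by (simp add: tendsto_cong)
qed

lemma
  assumes f: "admissible f C" and w: "is_solution f a w"
  shows slope_over_tendsto: "((\<lambda>x. slope f w x / x) \<longlongrightarrow> rhs f w 0 / N) (at_right 0)"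
    and slope_tendsto_0: "(slope f w \<longlongrightarrow> 0) (at_right 0)"
    and rhs_tendsto_0: "(rhs f w \<longlongrightarrow> rhs f w 0) (at_right 0)"
    and solution_difference_quotient_0: "((\<lambda>x. (w x - w 0) / x) \<longlongrightarrow> 0) (at_right 0)"
proof -
  have R2: "0 \<le> R / 2" "R / 2 < R" "0 < R / 2" using R_positive by auto
  note rhs_cont = solution_continuous_on_rhs[OF f w R2(1,2)]
  have "((\<lambda>x. integral {0..x} (\<lambda>t. rho t * rhs f w t) / (x * rho x)) \<longlongrightarrow> rhs f w 0 / N) (at_right 0)"
    by (rule rho_weighted_mean_tendsto[OF rhs_cont R2(3)])
  then show slope_lim: "((\<lambda>x. slope f w x / x) \<longlongrightarrow> rhs f w 0 / N) (at_right 0)"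
    unfolding slope_def flux_def by (simp add: mult.commute)
  show "(rhs f w \<longlongrightarrow> rhs f w 0) (at_right 0)" using continuous_on_Icc_at_rightD[OF rhs_cont R2(3)] .
  show slope_lim0: "(slope f w \<longlongrightarrow> 0) (at_right 0)"
    using continuous_on_Icc_at_rightD[OF solution_continuous_on_slope[OF f w R2(1,2)] R2(3)]
    by (simp add: slope_def)
  have ev: "\<forall>\<^sub>F x in at_right 0. 0 < x \<and> x < R"
    unfolding eventually_at_right_field using R_positive by (intro exI[of _ R]) auto
  have "((\<lambda>x. w x - w 0) \<longlongrightarrow> 0) (at_right 0)"
    using LIM_zero[OF continuous_on_Icc_at_rightD[OF is_solution_continuous_on[OF w R2(1,2)] R2(3)]] .
  moreover have "((\<lambda>x::real. x) \<longlongrightarrow> 0) (at_right 0)" by (rule tendsto_ident_at)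
  moreover have "\<forall>\<^sub>F x in at_right 0. (x::real) \<noteq> 0"
    using eventually_at_right_less[of "0::real"] by (rule eventually_mono) simp
  moreover have "\<forall>\<^sub>F x in at_right (0::real). (1::real) \<noteq> 0" by simp
  moreover have "\<forall>\<^sub>F x in at_right 0. ((\<lambda>x. w x - w 0) has_real_derivative - slope f w x) (at x)"
    using ev by (rule eventually_mono) (use DERIV_diff[OF solution_has_derivative[OF f w] DERIV_const] in simp)
  moreover have "\<forall>\<^sub>F x in at_right (0::real). ((\<lambda>x. x) has_real_derivative 1) (at x)"
    by (simp add: DERIV_ident)
  moreover have "((\<lambda>x. - slope f w x / 1) \<longlongrightarrow> 0) (at_right 0)" using tendsto_minus[OF slope_lim0] by simp
  ultimately show "((\<lambda>x. (w x - w 0) / x) \<longlongrightarrow> 0) (at_right 0)" by (rule lhopital_right_0)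
qed

lemma slope_eq_if_rhs_eq:
  assumes "\<And>t. t \<in> {0..s} \<Longrightarrow> rhs f v t = rhs f' v' t"
  shows "slope f v s = slope f' v' s"
proof -
  have "flux f v s = flux f' v' s" unfolding flux_def using assms by (intro integral_cong) simp
  then show ?thesis by (simp add: slope_def)
qed

lemma profile_locally_cut_sol:
  assumes V: "glued_solution a V"
    and r: "r \<in> {0..<R}"
  shows "\<exists>\<epsilon>>0. \<forall>t\<in>{0..r}. V t = cut_sol \<epsilon> a t \<and> rhs g V t = rhs (g_cut \<epsilon>) (cut_sol \<epsilon> a) t
    \<and> slope g V t = slope (g_cut \<epsilon>) (cut_sol \<epsilon> a) t"
proof -
  obtain \<epsilon> where \<epsilon>: "0 < \<epsilon>" "\<And>t. t \<in> {0..r} \<Longrightarrow> V t = cut_sol \<epsilon> a t \<and> \<epsilon> \<le> cut_sol \<epsilon> a t"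
    using glued_solutionD[OF V r] by blast
  have rhs: "rhs g V t = rhs (g_cut \<epsilon>) (cut_sol \<epsilon> a) t" if "t \<in> {0..r}" for t
    using \<epsilon>(2)[OF that] by (simp add: rhs_def g_cut_def max_absorb1)
  have "slope g V t = slope (g_cut \<epsilon>) (cut_sol \<epsilon> a) t" if "t \<in> {0..r}" for t
    using that by (intro slope_eq_if_rhs_eq rhs) auto
  with \<epsilon> rhs show ?thesis by blast
qed

definition profile_deriv :: "(real \<Rightarrow> real) \<Rightarrow> real \<Rightarrow> real" where
  "profile_deriv V r = - slope g V r"

definition profile_deriv2 :: "(real \<Rightarrow> real) \<Rightarrow> real \<Rightarrow> real" where
  "profile_deriv2 V r = - (rhs g V r - slope g V r * ((real N - 1) / r - \<mu>))"

lemma profile_has_derivatives: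
  assumes V: "glued_solution a V"
    and r: "r \<in> {0<..<R}"
  shows "(V has_real_derivative profile_deriv V r) (at r)"
    and "(profile_deriv V has_real_derivative profile_deriv2 V r) (at r)"
    and "isCont (profile_deriv2 V) r"
proof -
  define r1 where "r1 = (r + R) / 2"
  have r1: "r1 \<in> {0..<R}" "r \<in> {0<..<r1}" using r by (auto simp: r1_def)
  obtain \<epsilon> where \<epsilon>: "0 < \<epsilon>" and eq: "\<And>t. t \<in> {0..r1} \<Longrightarrow> V t = cut_sol \<epsilon> a t \<and>
      rhs g V t = rhs (g_cut \<epsilon>) (cut_sol \<epsilon> a) t \<and> slope g V t = slope (g_cut \<epsilon>) (cut_sol \<epsilon> a) t"
    using profile_locally_cut_sol[OF V r1(1)] by blast
  note f = admissible_g_cut[OF \<epsilon>] and w = is_solution_cut_sol[OF \<epsilon>, of a]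
  have r': "0 < r" "r < R" using r by auto
  have S: "open {0<..<r1}" "r \<in> {0<..<r1}" using r1 by auto
  have "(V has_real_derivative - slope (g_cut \<epsilon>) (cut_sol \<epsilon> a) r) (at r)"
    by (rule has_field_derivative_transform_within_open[OF solution_has_derivative[OF f w r'] S])
       (simp add: eq)
  then show "(V has_real_derivative profile_deriv V r) (at r)"
    using eq[of r] r1 by (simp add: profile_deriv_def)
  define D2 where "D2 s = - (rhs (g_cut \<epsilon>) (cut_sol \<epsilon> a) s
      - slope (g_cut \<epsilon>) (cut_sol \<epsilon> a) s * ((real N - 1) / s - \<mu>))" for s
  have eq2: "D2 s = profile_deriv2 V s" if "s \<in> {0<..<r1}" for s
    using eq[of s] that by (simp add: profile_deriv2_def D2_def)
  have "((\<lambda>s. - slope (g_cut \<epsilon>) (cut_sol \<epsilon> a) s) has_real_derivative D2 r) (at r)"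
    unfolding D2_def using DERIV_minus[OF slope_has_derivative[OF f w r']] .
  then have "(profile_deriv V has_real_derivative D2 r) (at r)"
    by (rule has_field_derivative_transform_within_open[OF _ S]) (simp add: eq profile_deriv_def)
  then show "(profile_deriv V has_real_derivative profile_deriv2 V r) (at r)"
    using eq2[OF S(2)] by simp
  have "isCont (rhs (g_cut \<epsilon>) (cut_sol \<epsilon> a)) r"
    using continuous_on_interior[OF solution_continuous_on_rhs[OF f w], of r1 r] r1 by simp
  then have "isCont D2 r"
    unfolding D2_def using r' DERIV_isCont[OF slope_has_derivative[OF f w r']]
    by (intro continuous_intros) auto
  moreover have "\<forall>\<^sub>F s in nhds r. s \<in> {0<..<r1}" using S by (rule eventually_nhds_in_open)
  then have "\<forall>\<^sub>F s in nhds r. D2 s = profile_deriv2 V s" by (rule eventually_mono) (rule eq2)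
  ultimately show "isCont (profile_deriv2 V) r" using isCont_cong by blast
qed

lemma profile_limits_at_0:
  assumes V: "glued_solution a V"
  shows "((\<lambda>r. (V r - V 0) / r) \<longlongrightarrow> 0) (at_right 0)"
    and "((\<lambda>r. profile_deriv V r / r) \<longlongrightarrow> - rhs g V 0 / N) (at_right 0)"
    and "(profile_deriv2 V \<longlongrightarrow> - rhs g V 0 / N) (at_right 0)"
proof -
  have R2: "R / 2 \<in> {0..<R}" using R_positive by simp
  obtain \<epsilon> where \<epsilon>: "0 < \<epsilon>" and eq: "\<And>t. t \<in> {0..R/2} \<Longrightarrow> V t = cut_sol \<epsilon> a t \<and>
      rhs g V t = rhs (g_cut \<epsilon>) (cut_sol \<epsilon> a) t \<and> slope g V t = slope (g_cut \<epsilon>) (cut_sol \<epsilon> a) t"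
    using profile_locally_cut_sol[OF V R2] by blast
  note f = admissible_g_cut[OF \<epsilon>] and w = is_solution_cut_sol[OF \<epsilon>, of a]
  let ?w = "cut_sol \<epsilon> a" and ?f = "g_cut \<epsilon>"
  have ev: "\<forall>\<^sub>F s in at_right 0. s \<in> {0..R/2}"
    unfolding eventually_at_right_field using R_positive by (intro exI[of _ "R/2"]) auto
  have 0: "V 0 = ?w 0" "rhs g V 0 = rhs ?f ?w 0" using eq[of 0] R_positive by auto
  have "\<forall>\<^sub>F s in at_right 0. (?w s - ?w 0) / s = (V s - V 0) / s"
    using ev by (rule eventually_mono) (simp add: eq 0)
  with solution_difference_quotient_0[OF f w]
  show "((\<lambda>r. (V r - V 0) / r) \<longlongrightarrow> 0) (at_right 0)" by (simp add: tendsto_cong)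
  have "\<forall>\<^sub>F s in at_right 0. - (slope ?f ?w s / s) = profile_deriv V s / s"
    using ev by (rule eventually_mono) (simp add: eq profile_deriv_def)
  with tendsto_minus[OF slope_over_tendsto[OF f w]]
  show "((\<lambda>r. profile_deriv V r / r) \<longlongrightarrow> - rhs g V 0 / N) (at_right 0)"
    by (simp add: tendsto_cong 0)
  have "\<forall>\<^sub>F s in at_right 0. - rhs ?f ?w s + (real N - 1) * (slope ?f ?w s / s) - \<mu> * slope ?f ?w s
      = profile_deriv2 V s"
    using ev by (rule eventually_mono) (simp add: eq profile_deriv2_def algebra_simps)
  moreover have "((\<lambda>s. - rhs ?f ?w s + (real N - 1) * (slope ?f ?w s / s) - \<mu> * slope ?f ?w s)
      \<longlongrightarrow> - rhs ?f ?w 0 + (real N - 1) * (rhs ?f ?w 0 / N) - \<mu> * 0) (at_right 0)"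
    by (intro tendsto_intros slope_over_tendsto[OF f w] rhs_tendsto_0[OF f w] slope_tendsto_0[OF f w])
  moreover have "- rhs ?f ?w 0 + (real N - 1) * (rhs ?f ?w 0 / N) - \<mu> * 0 = - rhs g V 0 / N"
    using N_ge_2 0 by (simp add: field_simps)
  ultimately show "(profile_deriv2 V \<longlongrightarrow> - rhs g V 0 / N) (at_right 0)" by (simp add: tendsto_cong)
qed

lemma glued_solution_radial_C2:
  assumes V: "glued_solution a V"
  shows "radial_C2_profile R V (profile_deriv V) (profile_deriv2 V) (- rhs g V 0 / N)"
  unfolding radial_C2_profile_def
proof (intro conjI ballI)
  show "(V has_real_derivative profile_deriv V r) (at r)" if "r \<in> {0<..<R}" for r
    using profile_has_derivatives(1)[OF V that] .
  show "(profile_deriv V has_real_derivative profile_deriv2 V r) (at r)" if "r \<in> {0<..<R}" for r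
    using profile_has_derivatives(2)[OF V that] .
  show "isCont (profile_deriv2 V) r" if "r \<in> {0<..<R}" for r
    using profile_has_derivatives(3)[OF V that] .
qed (use profile_limits_at_0[OF V] in auto)

lemma glued_solution_ode:
  assumes V: "glued_solution a V" and r: "r \<in> {0<..<R}"
  shows "- (profile_deriv2 V r + (real N - 1) * (profile_deriv V r / r))
      = p (R - r) * g (V r) + 1 + \<mu> * \<bar>profile_deriv V r\<bar>"
proof -
  have r': "r \<in> {0..<R}" using r by simp
  obtain \<epsilon> where \<epsilon>: "0 < \<epsilon>" "\<forall>t\<in>{0..r}. slope g V t = slope (g_cut \<epsilon>) (cut_sol \<epsilon> a) t"
    using profile_locally_cut_sol[OF V r'] by blast
  have "0 \<le> slope g V r"
    using solution_slope_nonneg[OF admissible_g_cut[OF \<epsilon>(1)] is_solution_cut_sol[OF \<epsilon>(1)]] \<epsilon>(2) r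
    by auto
  then show ?thesis using r by (simp add: profile_deriv_def profile_deriv2_def rhs_def field_simps)
qed

lemma threshold_radial_profile:
  obtains V V1 V2 c where "radial_C2_profile R V V1 V2 c" "continuous_on {0..R} V" "V R = 0"
    "\<And>r. r \<in> {0..<R} \<Longrightarrow> 0 < V r"
    "\<And>r. r \<in> {0<..<R} \<Longrightarrow> - (V2 r + (real N - 1) * (V1 r / r)) = p (R - r) * g (V r) + 1 + \<mu> * \<bar>V1 r\<bar>"
    "- (real N * c) = p R * g (V 0) + 1"
proof -
  obtain a\<^sub>0 where a\<^sub>0: "0 < a\<^sub>0" "survives a\<^sub>0" "\<And>a. 0 < a \<Longrightarrow> a < a\<^sub>0 \<Longrightarrow> \<not> survives a"
    using survival_threshold by auto
  obtain V where V: "V R = 0" "glued_solution a\<^sub>0 V" using surviving_profile[OF a\<^sub>0(2)] by blast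
  note C2 = glued_solution_radial_C2[OF V(2)]
  have cont: "continuous_on {0..R} V"
    using radial_C2_profile_continuous_on[OF C2 R_positive] threshold_profile_tendsto_0[OF a\<^sub>0(1,3) V(2)] V(1)
    by simp
  have pos: "0 < V r" if r: "r \<in> {0..<R}" for r
  proof -
    obtain \<epsilon> where \<epsilon>: "0 < \<epsilon>" "\<forall>t\<in>{0..r}. V t = cut_sol \<epsilon> a\<^sub>0 t \<and> \<epsilon> \<le> cut_sol \<epsilon> a\<^sub>0 t"
      using glued_solutionD[OF V(2) r] by blast
    then have "V r = cut_sol \<epsilon> a\<^sub>0 r" "\<epsilon> \<le> cut_sol \<epsilon> a\<^sub>0 r" using r by auto
    then show ?thesis using \<epsilon>(1) by linarith
  qed
  have ode0: "- (real N * (- rhs g V 0 / N)) = p R * g (V 0) + 1" using N_ge_2 by (simp add: rhs_def)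
  show ?thesis by (rule that[OF C2 cont V(1) pos glued_solution_ode[OF V(2)] ode0])
qed

end

theorem lemma3p2:
  fixes g p :: "real \<Rightarrow> real" and R \<mu> :: real
  assumes dim: "CARD('n::finite) \<ge> 2"
    and g_C1: "\<exists>g'. (\<forall>t>0. (g has_real_derivative g' t) (at t)) \<and> continuous_on {0<..} g'"
    and g_pos: "\<forall>t>0. g t > 0"
    and g_decr: "\<forall>s t. 0 < s \<and> s \<le> t \<longrightarrow> g t \<le> g s"
    and g_lim: "filterlim g at_top (at_right 0)"
    and p_pos: "\<forall>t>0. p t > 0"
    and p_noninc: "\<forall>s t. 0 < s \<and> s \<le> t \<longrightarrow> p t \<le> p s"
    and p_hoelder: "loc_hoelder_pos p"
    and R_pos: "R > 0"
    and p_int: "(\<lambda>t. t * p t) integrable_on {0..1}"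
    and mu_pos: "\<mu> > 0"
  shows "\<exists>(u :: real^'n \<Rightarrow> real) (Du :: real^'n \<Rightarrow> real^'n) (D2u :: real^'n \<Rightarrow> real^'n^'n).
           (\<forall>x\<in>ball 0 R. (u has_derivative (\<lambda>h. Du x \<bullet> h)) (at x)
                           \<and> (Du has_derivative (\<lambda>h. D2u x *v h)) (at x))
         \<and> continuous_on (ball 0 R) D2u
         \<and> continuous_on (cball 0 R) u
         \<and> (\<forall>x\<in>ball 0 R. - trace_mat (D2u x) = p (R - norm x) * g (u x) + 1 + \<mu> * norm (Du x))
         \<and> (\<forall>x\<in>ball 0 R. u x > 0)
         \<and> (\<forall>x. norm x = R \<longrightarrow> u x = 0)
         \<and> (\<forall>x\<in>cball 0 R. \<forall>y\<in>cball 0 R. norm x = norm y \<longrightarrow> u x = u y)"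
proof -
  obtain g' where g': "\<And>t. t > 0 \<Longrightarrow> (g has_real_derivative g' t) (at t)" "continuous_on {0<..} g'"
    using g_C1 by blast
  interpret radial_problem g g' p R \<mu> "CARD('n)"
    using dim g' g_pos g_decr p_pos p_noninc loc_hoelder_pos_imp_continuous_on[OF p_hoelder] R_pos p_int mu_pos
    by unfold_locales auto
  obtain V V1 V2 c where V: "radial_C2_profile R V V1 V2 c" "continuous_on {0..R} V" "V R = 0"
    "\<And>r. r \<in> {0..<R} \<Longrightarrow> 0 < V r"
    "\<And>r. r \<in> {0<..<R} \<Longrightarrow> - (V2 r + (real CARD('n) - 1) * (V1 r / r)) = p (R - r) * g (V r) + 1 + \<mu> * \<bar>V1 r\<bar>"
    "- (real CARD('n) * c) = p R * g (V 0) + 1"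
    using threshold_radial_profile by blast
  have "- trace_mat (radial_hessian V1 V2 c x) = p (R - norm x) * g (radial V x) + 1 + \<mu> * norm (radial_grad V1 x)"
    if "x \<in> ball 0 R" for x :: "real^'n"
    using V(5)[of "norm x"] V(6) that
    by (cases "x = 0") (auto simp: trace_radial_hessian norm_radial_grad radial_def radial_grad_def)
  with V show ?thesis
    by (intro exI[of _ "radial V"] exI[of _ "radial_grad V1"] exI[of _ "radial_hessian V1 V2 c"] conjI ballI allI impI
        radial_C2_profile_has_derivative radial_C2_profile_continuous_on_hessian continuous_on_cball_radial)
       (auto simp: radial_def)
qed

end
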